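(* In any of the three models (Poisson multigraph, exponential, uniform) and for any fixed $k\ge1$, with probability tending to $1$ as $n\to\infty$, $T_k$ exists and uses only edges of cost at most $2k\log n/n$.
   Context: Exponential model: the complete graph $K_n$ with i.i.d. edge costs exponential with mean 1. Uniform model: $K_n$ with i.i.d. edge costs uniform on $(0,1)$. Poisson model: for each unordered pair of distinct vertices of $[n]$, infinitely many parallel edges whose costs are the points of an intensity-1 Poisson process on $(0,\infty)$, independent over pairs. In each model, $T_1$ is the minimum-cost spanning tree, and $T_k$ ($k\ge2$) is the minimum-cost spanning tree of the (multi)graph with the edges of $T_1,\dots,T_{k-1}$ deleted (it may fail to exist in the simple-graph models if that graph is disconnected). *)

theory Defs
  imports "HOL-Probability.Probability"
begin

text \<open>A (multi)graph is given by an index set of edges together with a map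
  ends assigning to each edge its (two-element) set of end vertices, and a
  cost function w on edges.\<close>

definition adj :: "('e \<Rightarrow> nat set) \<Rightarrow> 'e set \<Rightarrow> nat \<Rightarrow> nat \<Rightarrow> bool" where
  "adj ends F u v \<longleftrightarrow> (\<exists>e\<in>F. ends e = {u, v} \<and> u \<noteq> v)"

definition connects :: "('e \<Rightarrow> nat set) \<Rightarrow> 'e set \<Rightarrow> nat \<Rightarrow> nat \<Rightarrow> bool" where
  "connects ends F u v \<longleftrightarrow> (adj ends F)\<^sup>*\<^sup>* u v"

definition is_spanning_tree :: "nat \<Rightarrow> ('e \<Rightarrow> nat set) \<Rightarrow> 'e set \<Rightarrow> bool" where
  "is_spanning_tree n ends F \<longleftrightarrow>
     finite F \<and> (\<forall>e\<in>F. ends e \<subseteq> {0..<n}) \<and>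
     (\<forall>u\<in>{0..<n}. \<forall>v\<in>{0..<n}. connects ends F u v) \<and>
     (\<forall>e\<in>F. \<forall>u v. ends e = {u, v} \<longrightarrow> \<not> connects ends (F - {e}) u v)"

definition is_mst :: "nat \<Rightarrow> ('e \<Rightarrow> nat set) \<Rightarrow> ('e \<Rightarrow> real) \<Rightarrow> 'e set \<Rightarrow> 'e set \<Rightarrow> bool" where
  "is_mst n ends w A F \<longleftrightarrow> F \<subseteq> A \<and> is_spanning_tree n ends F \<and>
     (\<forall>F'. F' \<subseteq> A \<longrightarrow> is_spanning_tree n ends F' \<longrightarrow> sum w F \<le> sum w F')"

text \<open>The sequence is defined (Some) only
  when each of these minimum spanning trees exists and is unique (which holds
  almost surely whenever the MST exists, since costs are a.s. distinct).\<close>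

fun msts :: "nat \<Rightarrow> ('e \<Rightarrow> nat set) \<Rightarrow> ('e \<Rightarrow> real) \<Rightarrow> 'e set \<Rightarrow> nat \<Rightarrow> 'e set list option" where
  "msts n ends w A 0 = Some []"
| "msts n ends w A (Suc k) =
     (case msts n ends w A k of
        None \<Rightarrow> None
      | Some Ts \<Rightarrow>
          (let B = A - \<Union>(set Ts) in
           if \<exists>!F. is_mst n ends w B F
           then Some (Ts @ [THE F. is_mst n ends w B F]) else None))"

definition Tk_exists_and_cheap ::
  "nat \<Rightarrow> ('e \<Rightarrow> nat set) \<Rightarrow> ('e \<Rightarrow> real) \<Rightarrow> 'e set \<Rightarrow> nat \<Rightarrow> real \<Rightarrow> bool" where
  "Tk_exists_and_cheap n ends w A k c \<longleftrightarrow>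
     (case msts n ends w A k of
        None \<Rightarrow> False
      | Some Ts \<Rightarrow> (\<forall>e\<in>last Ts. w e \<le> c))"

definition vpairs :: "nat \<Rightarrow> (nat \<times> nat) set" where
  "vpairs n = {(i, j). i < j \<and> j < n}"

definition pair_ends :: "nat \<times> nat \<Rightarrow> nat set" where
  "pair_ends p = {fst p, snd p}"

definition exp_model :: "nat \<Rightarrow> (nat \<times> nat \<Rightarrow> real) measure" where
  "exp_model n = PiM (vpairs n) (\<lambda>_. density lborel (exponential_density 1))"

definition unif_model :: "nat \<Rightarrow> (nat \<times> nat \<Rightarrow> real) measure" where
  "unif_model n = PiM (vpairs n) (\<lambda>_. uniform_measure lborel {0<..<1})"

text \<open>Poisson model: for each pair p, i.i.d. Exp(1) inter-arrival times X(p,0),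
  X(p,1), ...; the m-th parallel edge (p,m) between the endpoints of p has cost
  X(p,0)+...+X(p,m), so that the costs of the parallel edges at p are the points
  of an intensity-1 Poisson process on (0,\<infinity>), independently over pairs.\<close>

definition poisson_model :: "nat \<Rightarrow> ((nat \<times> nat) \<times> nat \<Rightarrow> real) measure" where
  "poisson_model n = PiM (vpairs n \<times> UNIV) (\<lambda>_. density lborel (exponential_density 1))"

definition poisson_edges :: "nat \<Rightarrow> ((nat \<times> nat) \<times> nat) set" where
  "poisson_edges n = vpairs n \<times> UNIV"

definition poisson_ends :: "(nat \<times> nat) \<times> nat \<Rightarrow> nat set" where
  "poisson_ends e = pair_ends (fst e)"

definition poisson_cost :: "((nat \<times> nat) \<times> nat \<Rightarrow> real) \<Rightarrow> (nat \<times> nat) \<times> nat \<Rightarrow> real" where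
  "poisson_cost X e = (\<Sum>l\<le>snd e. X (fst e, l))"

definition thr :: "nat \<Rightarrow> nat \<Rightarrow> real" where
  "thr k n = 2 * real k * ln (real n) / real n"

end

theory Submission
  imports Defs "HOL-Real_Asymp.Real_Asymp"
begin

text \<open>Cut the costs up to c = 2k log n / n into k layers of width 2 log n / n. In each layer
  every pair of vertices is present independently with probability at least 3/2 log n / n (in
  the Poisson model already through its cheapest parallel edge), so a union bound over all cuts
  shows that with probability 1 - o(1) every layer connects the vertex set. Deterministically,
  once all k layers are connected and the edges of cost at most c are finitely many with
  distinct costs, each T_j exists, is the Kruskal tree of the remaining edges, and uses only
  edges of cost at most jc/k. In the Poisson model the finiteness condition can fail, up to
  null events, only if some pair has three inter-arrival times at most c, which has probability
  at most n^2 c^3 = o(1).\<close>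

section \<open>Connectivity in multigraphs\<close>

lemma adj_sym: "adj ends F u v \<Longrightarrow> adj ends F v u"
  unfolding adj_def by (auto simp: insert_commute)

lemma adj_mono: "F \<subseteq> G \<Longrightarrow> adj ends F u v \<Longrightarrow> adj ends G u v"
  unfolding adj_def by auto

lemma connects_refl [simp]: "connects ends F u u"
  unfolding connects_def by simp

lemma connects_trans: "connects ends F u v \<Longrightarrow> connects ends F v w \<Longrightarrow> connects ends F u w"
  unfolding connects_def by (rule rtranclp_trans)

lemma connects_adj_trans: "connects ends F u v \<Longrightarrow> adj ends F v w \<Longrightarrow> connects ends F u w"
  unfolding connects_def by (rule rtranclp.rtrancl_into_rtrancl)

lemma connects_sym: "connects ends F u v \<Longrightarrow> connects ends F v u"
  unfolding connects_def
proof (induction rule: rtranclp_induct)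
  case (step y z)
  then show ?case using adj_sym[OF step(2)] by (meson converse_rtranclp_into_rtranclp)
qed simp

lemma connects_mono: "F \<subseteq> G \<Longrightarrow> connects ends F u v \<Longrightarrow> connects ends G u v"
  unfolding connects_def by (metis adj_mono mono_rtranclp)

lemma connects_edge: "e \<in> F \<Longrightarrow> ends e = {u, v} \<Longrightarrow> u \<noteq> v \<Longrightarrow> connects ends F u v"
  unfolding connects_def adj_def by (rule r_into_rtranclp) auto

lemma connects_empty_imp_eq: "connects ends {} u v \<Longrightarrow> u = v"
  unfolding connects_def adj_def by (induction rule: rtranclp_induct) auto

lemma connects_doubleton:
  assumes "{a, b} = {u, v}" "connects ends F u v"
  shows "connects ends F a b"
  using assms connects_sym by (metis doubleton_eq_iff)

lemma connects_Diff_edge: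
  assumes "connects ends F x y" "\<not> connects ends (F - {g}) x y" "ends g = {a, b}"
  shows "(connects ends (F - {g}) x a \<and> connects ends (F - {g}) b y) \<or>
         (connects ends (F - {g}) x b \<and> connects ends (F - {g}) a y)"
proof -
  let ?C = "connects ends (F - {g})"
  have "?C x y \<or> (?C x a \<and> ?C b y) \<or> (?C x b \<and> ?C a y)"
    using assms(1) unfolding connects_def[of ends F]
  proof (induction rule: rtranclp_induct)
    case (step y z)
    from step(2) obtain e where e: "e \<in> F" "ends e = {y, z}" "y \<noteq> z" unfolding adj_def by auto
    show ?case
    proof (cases "e = g")
      case True
      then have "(y = a \<and> z = b) \<or> (y = b \<and> z = a)" using e assms(3) by (auto simp: doubleton_eq_iff)
      then show ?thesis using step(3) by (metis connects_refl)
    next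
      case False
      then have "adj ends (F - {g}) y z" using e unfolding adj_def by auto
      then show ?thesis using step(3) connects_adj_trans by metis
    qed
  qed simp
  then show ?thesis using assms(2) by blast
qed

lemma connects_crossing_edge:
  assumes "connects ends F x y" "x \<in> S" "y \<notin> S"
  shows "\<exists>e\<in>F. \<exists>a b. ends e = {a, b} \<and> a \<in> S \<and> b \<notin> S"
  using assms unfolding connects_def
proof (induction rule: rtranclp_induct)
  case (step y z)
  from step(2) obtain e where "e \<in> F" "ends e = {y, z}" unfolding adj_def by auto
  then show ?case using step by (cases "y \<in> S") blast+
qed simp

lemma connects_minimal_subset:
  assumes "connects ends H u v" "finite H"
  obtains H0 where "H0 \<subseteq> H" "connects ends H0 u v"
    "\<And>g. g \<in> H0 \<Longrightarrow> \<not> connects ends (H0 - {g}) u v"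
proof -
  define P where "P = (\<lambda>H'. H' \<subseteq> H \<and> connects ends H' u v)"
  obtain H0 where H0: "P H0" "\<And>H'. P H' \<Longrightarrow> card H0 \<le> card H'"
    using ex_has_least_nat[of P H card] assms unfolding P_def by blast
  have "finite H0" using H0(1) assms(2) finite_subset unfolding P_def by blast
  show ?thesis
  proof (rule that)
    show "H0 \<subseteq> H" "connects ends H0 u v" using H0(1) unfolding P_def by auto
    fix g assume "g \<in> H0"
    show "\<not> connects ends (H0 - {g}) u v"
    proof
      assume "connects ends (H0 - {g}) u v"
      then have "P (H0 - {g})" using H0(1) unfolding P_def by blast
      then have "card H0 \<le> card (H0 - {g})" by (rule H0(2))
      then show False using card_Diff1_less[OF \<open>finite H0\<close> \<open>g \<in> H0\<close>] by simp
    qed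
  qed
qed

definition proper_edges :: "nat \<Rightarrow> ('e \<Rightarrow> nat set) \<Rightarrow> 'e set \<Rightarrow> bool" where
  "proper_edges n ends A \<longleftrightarrow> (\<forall>e\<in>A. \<exists>u v. u \<noteq> v \<and> u < n \<and> v < n \<and> ends e = {u, v})"

lemma proper_edgesD:
  "proper_edges n ends A \<Longrightarrow> e \<in> A \<Longrightarrow> ends e = {u, v} \<Longrightarrow> u \<noteq> v \<and> u < n \<and> v < n"
  unfolding proper_edges_def by (force simp: doubleton_eq_iff)

lemma proper_edgesE:
  assumes "proper_edges n ends A" "e \<in> A"
  obtains u v where "ends e = {u, v}" "u \<noteq> v" "u < n" "v < n"
  using assms unfolding proper_edges_def by blast

lemma proper_edges_mono: "proper_edges n ends A \<Longrightarrow> B \<subseteq> A \<Longrightarrow> proper_edges n ends B"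
  unfolding proper_edges_def by blast

section \<open>Minimum spanning trees\<close>

lemma spanning_tree_exchange:
  assumes T: "is_spanning_tree n ends F" and g: "g \<in> F" "ends g = {a, b}"
    and S: "S = {x. connects ends (F - {g}) a x}"
    and h: "h \<notin> F" "ends h = {x0, y0}" "x0 \<in> S" "y0 \<notin> S" "y0 < n" "x0 < n"
  shows "is_spanning_tree n ends (insert h (F - {g}))"
proof -
  let ?F = "insert h (F - {g})"
  let ?C = "connects ends (F - {g})"
  have fin: "finite F" and ends_in: "\<forall>e\<in>F. ends e \<subseteq> {0..<n}"
    and span: "\<forall>u\<in>{0..<n}. \<forall>v\<in>{0..<n}. connects ends F u v"
    and acyc: "\<forall>e\<in>F. \<forall>u v. ends e = {u, v} \<longrightarrow> \<not> connects ends (F - {e}) u v"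
    using T unfolding is_spanning_tree_def by auto
  have ab: "a < n" "b < n" using ends_in g by auto
  have side: "?C a z \<or> ?C b z" if "z < n" for z
  proof -
    have "connects ends F a z" using span ab that by auto
    then show ?thesis using connects_Diff_edge[of ends F a z g a b] g(2) by (metis connects_sym)
  qed
  have "x0 \<noteq> y0" using h by auto
  have by0: "?C b y0" using side[OF h(5)] h(4) S by auto
  have ax0: "?C a x0" using h(3) S by auto
  have sub: "F - {g} \<subseteq> ?F" by auto
  have "connects ends ?F a b"
  proof -
    have "connects ends ?F a x0" using connects_mono[OF sub ax0] .
    moreover have "connects ends ?F x0 y0" using connects_edge[of h ?F ends x0 y0] h \<open>x0 \<noteq> y0\<close> by auto
    moreover have "connects ends ?F y0 b" using connects_mono[OF sub connects_sym[OF by0]] .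
    ultimately show ?thesis using connects_trans by metis
  qed
  then have "connects ends ?F a z" if "z < n" for z
    using side[OF that] connects_mono[OF sub] connects_trans by metis
  then have span': "\<forall>u\<in>{0..<n}. \<forall>v\<in>{0..<n}. connects ends ?F u v"
    using connects_sym connects_trans by (metis atLeastLessThan_iff)
  have acyc': "\<forall>e\<in>?F. \<forall>u v. ends e = {u, v} \<longrightarrow> \<not> connects ends (?F - {e}) u v"
  proof (intro ballI allI impI notI)
    fix f p q assume f: "f \<in> ?F" and fe: "ends f = {p, q}" and c: "connects ends (?F - {f}) p q"
    show False
    proof (cases "f = h")
      case True
      then have "?F - {f} = F - {g}" using h(1) g by auto
      then have "?C x0 y0" using c fe True h(2) connects_doubleton by metis
      then show False using h(3,4) S connects_trans by blast
    next
      case False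
      then have fF: "f \<in> F" "f \<noteq> g" using f by auto
      let ?H = "F - {g} - {f}"
      have "\<not> connects ends ?H p q"
        using acyc fF fe connects_mono[of ?H "F - {f}"] by blast
      moreover have "connects ends (insert h ?H) p q" using c False by (simp add: insert_Diff_if)
      moreover have "insert h ?H - {h} = ?H" using h(1) by auto
      ultimately have sd: "(connects ends ?H p x0 \<and> connects ends ?H y0 q) \<or>
         (connects ends ?H p y0 \<and> connects ends ?H x0 q)"
        using connects_Diff_edge[of ends "insert h ?H" p q h x0 y0] h(2) by auto
      have HF: "?H \<subseteq> F - {g}" by auto
      have "?C p q" using connects_edge[of f "F - {g}" ends p q] fF fe
        by (metis connects_refl insertI1 insert_Diff insert_Diff_single insert_iff)
      have "?C a y0" using sd
      proof
        assume "connects ends ?H p x0 \<and> connects ends ?H y0 q"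
        then have "?C x0 p" "?C q y0" using connects_mono[OF HF] connects_sym by blast+
        then show "?C a y0" using ax0 \<open>?C p q\<close> connects_trans by meson
      next
        assume "connects ends ?H p y0 \<and> connects ends ?H x0 q"
        then have "?C x0 q" "?C p y0" using connects_mono[OF HF] connects_sym by blast+
        then show "?C a y0" using ax0 \<open>?C p q\<close> connects_sym connects_trans by meson
      qed
      then show False using h(4) S by auto
    qed
  qed
  show ?thesis unfolding is_spanning_tree_def
    using fin ends_in span' acyc' h ab by auto
qed

text \<open>If the edges of B of cost at most c are finitely many, have distinct costs and connect all
  vertices, the minimum spanning tree of B is Kruskal's tree: the cheap edges that are not the
  most expensive edge of a cycle.\<close>

locale cheap_spanning =
  fixes n :: nat and ends :: "'e \<Rightarrow> nat set" and w :: "'e \<Rightarrow> real" and B :: "'e set" and c :: real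
  assumes proper: "proper_edges n ends B"
    and finite_cheap: "finite {e\<in>B. w e \<le> c}"
    and inj_cheap: "inj_on w {e\<in>B. w e \<le> c}"
    and connects_cheap: "\<forall>u<n. \<forall>v<n. connects ends {e\<in>B. w e \<le> c} u v"
begin

abbreviation "B' \<equiv> {e\<in>B. w e \<le> c}"

definition kruskal_tree where
  "kruskal_tree = {e\<in>B'. \<forall>u v. ends e = {u, v} \<longrightarrow> \<not> connects ends {f\<in>B'. w f < w e} u v}"

lemma kruskal_tree_subset: "kruskal_tree \<subseteq> B'"
  unfolding kruskal_tree_def by auto

lemma kruskal_tree_edgeE:
  assumes "e \<in> kruskal_tree"
  obtains u v where "ends e = {u, v}" "u \<noteq> v" "u < n" "v < n"
  using proper_edgesE[OF proper] assms kruskal_tree_subset by blast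

lemma finite_kruskal_tree: "finite kruskal_tree"
  using finite_cheap kruskal_tree_subset by (rule finite_subset[rotated])

lemma kruskal_tree_connects:
  assumes "u < n" "v < n"
  shows "connects ends kruskal_tree u v"
proof (rule ccontr)
  assume nc: "\<not> connects ends kruskal_tree u v"
  define S where "S = {x. connects ends kruskal_tree u x}"
  have uS: "u \<in> S" and vS: "v \<notin> S" using nc unfolding S_def by auto
  define C where "C = {e\<in>B'. \<exists>a b. ends e = {a, b} \<and> a \<in> S \<and> b \<notin> S}"
  have "connects ends B' u v" using connects_cheap assms by blast
  from connects_crossing_edge[OF this uS vS] have "C \<noteq> {}" unfolding C_def by blast
  moreover have "finite C" using finite_cheap unfolding C_def by (rule rev_finite_subset) blast
  ultimately have e0: "arg_min_on w C \<in> C" "\<And>e. e \<in> C \<Longrightarrow> w (arg_min_on w C) \<le> w e"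
    by (simp_all add: arg_min_if_finite(1) arg_min_least)
  define e0 where "e0 = arg_min_on w C"
  obtain a b where ab: "ends e0 = {a, b}" "a \<in> S" "b \<notin> S" "e0 \<in> B'"
    using e0(1) unfolding C_def e0_def by blast
  \<comment> \<open>the cheapest edge leaving S is not the heaviest edge of a cycle\<close>
  have "e0 \<in> kruskal_tree"
    unfolding kruskal_tree_def
  proof (intro CollectI conjI allI impI notI)
    show "e0 \<in> B" "w e0 \<le> c" using ab by auto
    fix p q assume "ends e0 = {p, q}" and "connects ends {f\<in>B'. w f < w e0} p q"
    then have "connects ends {f\<in>B'. w f < w e0} a b" using ab(1) connects_doubleton by metis
    from connects_crossing_edge[OF this ab(2,3)] obtain f where "f \<in> B'" "w f < w e0" "f \<in> C"
      unfolding C_def by blast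
    then show False using e0(2) unfolding e0_def by force
  qed
  moreover have "a \<noteq> b" using ab by blast
  ultimately have "connects ends kruskal_tree a b" using ab(1) connects_edge by metis
  then have "b \<in> S" using ab(2) connects_trans unfolding S_def by blast
  then show False using ab by simp
qed

lemma kruskal_tree_acyclic:
  assumes e: "e \<in> kruskal_tree" "ends e = {u, v}"
  shows "\<not> connects ends (kruskal_tree - {e}) u v"
proof
  assume c0: "connects ends (kruskal_tree - {e}) u v"
  have eB: "e \<in> B'" using e(1) kruskal_tree_subset by auto
  have uv: "u \<noteq> v" using proper_edgesD[OF proper _ e(2)] eB by simp
  have e_light: "\<not> connects ends {f\<in>B'. w f < w e} u v" using e unfolding kruskal_tree_def by blast
  \<comment> \<open>the heaviest edge g of a minimal connecting subset H0 is a bridge of H0\<close>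
  obtain H0 where H0sub: "H0 \<subseteq> kruskal_tree - {e}" and H0c: "connects ends H0 u v"
    and H0min: "\<And>g. g \<in> H0 \<Longrightarrow> \<not> connects ends (H0 - {g}) u v"
    using connects_minimal_subset[OF c0 finite_Diff[OF finite_kruskal_tree]] by blast
  have finH0: "finite H0" using H0sub finite_kruskal_tree by (meson finite_Diff finite_subset)
  have "H0 \<noteq> {}" using connects_empty_imp_eq[of ends u v] H0c uv by auto
  then have "Max (w ` H0) \<in> w ` H0" using finH0 by simp
  then obtain g where g: "g \<in> H0" "w g = Max (w ` H0)" by auto
  then have g_max: "\<And>f. f \<in> H0 \<Longrightarrow> w f \<le> w g" using finH0 by simp
  have gK: "g \<in> kruskal_tree" "g \<noteq> e" and gB: "g \<in> B'"
    using g(1) H0sub kruskal_tree_subset by auto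
  show False
  proof (cases "w g < w e")
    case True
    then have "H0 \<subseteq> {f\<in>B'. w f < w e}" using g_max H0sub kruskal_tree_subset by fastforce
    then show False using e_light connects_mono[OF _ H0c] by blast
  next
    case False
    have "w g \<noteq> w e" using inj_cheap gK(2) eB gB unfolding inj_on_def by blast
    then have lt: "w e < w g" using False by simp
    obtain a b where ab: "ends g = {a, b}" using kruskal_tree_edgeE[OF gK(1)] by metis
    have "\<not> connects ends (H0 - {g}) u v" using H0min g(1) .
    then have sd: "(connects ends (H0 - {g}) u a \<and> connects ends (H0 - {g}) b v) \<or>
         (connects ends (H0 - {g}) u b \<and> connects ends (H0 - {g}) a v)"
      using connects_Diff_edge[OF H0c _ ab] by simp
    let ?L = "{f\<in>B'. w f < w g}"
    have HL: "H0 - {g} \<subseteq> ?L"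
    proof
      fix f assume f: "f \<in> H0 - {g}"
      then have fB: "f \<in> B'" using H0sub kruskal_tree_subset by blast
      have "w f \<noteq> w g" using inj_cheap f gB fB unfolding inj_on_def by blast
      then show "f \<in> ?L" using g_max[of f] f fB by auto
    qed
    have Luv: "connects ends ?L u v" using connects_edge[of e ?L ends u v] eB lt e(2) uv by simp
    from sd have "connects ends ?L a b"
    proof
      assume A: "connects ends (H0 - {g}) u a \<and> connects ends (H0 - {g}) b v"
      have "connects ends ?L a u" using connects_sym[OF connects_mono[OF HL]] A by blast
      moreover have "connects ends ?L v b" using connects_sym[OF connects_mono[OF HL]] A by blast
      ultimately show ?thesis using Luv connects_trans by meson
    next
      assume A: "connects ends (H0 - {g}) u b \<and> connects ends (H0 - {g}) a v"
      have "connects ends ?L a v" using connects_mono[OF HL] A by blast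
      moreover have "connects ends ?L u b" using connects_mono[OF HL] A by blast
      ultimately show ?thesis using connects_sym[OF Luv] connects_trans by meson
    qed
    then show False using gK(1) ab unfolding kruskal_tree_def by blast
  qed
qed

lemma spanning_tree_kruskal_tree: "is_spanning_tree n ends kruskal_tree"
  unfolding is_spanning_tree_def
proof (intro conjI)
  show "\<forall>e\<in>kruskal_tree. ends e \<subseteq> {0..<n}"
  proof
    fix e assume "e \<in> kruskal_tree"
    then obtain u v where "ends e = {u, v}" "u < n" "v < n" by (rule kruskal_tree_edgeE)
    then show "ends e \<subseteq> {0..<n}" by simp
  qed
qed (use finite_kruskal_tree kruskal_tree_connects kruskal_tree_acyclic in auto)

lemma exchange_cheaper_edge:
  assumes T: "is_spanning_tree n ends F" and g: "g \<in> F" "ends g = {a, b}"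
    and L: "connects ends {f\<in>B'. w f < w g} a b"
  shows "\<exists>h. h \<in> B' \<and> h \<notin> F \<and> w h < w g \<and> is_spanning_tree n ends (insert h (F - {g}))"
proof -
  define S where "S = {x. connects ends (F - {g}) a x}"
  have "\<not> connects ends (F - {g}) a b" using T g unfolding is_spanning_tree_def by blast
  then have "a \<in> S" "b \<notin> S" using S_def by auto
  from connects_crossing_edge[OF L this] obtain h x0 y0
    where h: "h \<in> B'" "w h < w g" "ends h = {x0, y0}" "x0 \<in> S" "y0 \<notin> S"
    by auto
  have xy: "x0 \<noteq> y0" "x0 < n" "y0 < n" using proper_edgesD[OF proper _ h(3)] h(1) by auto
  have hF: "h \<notin> F"
  proof
    assume "h \<in> F"
    then have "connects ends (F - {g}) x0 y0" using connects_edge h(2,3) xy by (metis Diff_iff less_irrefl singletonD)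
    then show False using h(4,5) S_def connects_trans by blast
  qed
  show ?thesis using spanning_tree_exchange[OF T g S_def hF h(3,4,5) xy(3,2)] h hF by blast
qed

lemma spanning_tree_subset_kruskal_tree:
  assumes "is_spanning_tree n ends F" "F \<subseteq> kruskal_tree"
  shows "F = kruskal_tree"
proof (rule ccontr)
  assume "F \<noteq> kruskal_tree"
  then obtain e where e: "e \<in> kruskal_tree" "e \<notin> F" using assms(2) by blast
  then obtain u v where uv: "ends e = {u, v}" "u < n" "v < n"
    using kruskal_tree_edgeE by metis
  then have "connects ends F u v" using assms(1) unfolding is_spanning_tree_def by auto
  moreover have "F \<subseteq> kruskal_tree - {e}" using assms(2) e by blast
  ultimately have "connects ends (kruskal_tree - {e}) u v" using connects_mono by blast
  then show False using kruskal_tree_acyclic e uv by blast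
qed

lemma cheaper_spanning_tree:
  assumes T: "is_spanning_tree n ends F" "F \<subseteq> B'" and ne: "F \<noteq> kruskal_tree"
  shows "\<exists>F'. is_spanning_tree n ends F' \<and> F' \<subseteq> B' \<and> sum w F' < sum w F"
proof -
  obtain g where g: "g \<in> F" "g \<notin> kruskal_tree" using spanning_tree_subset_kruskal_tree[OF T(1)] ne by blast
  have gB: "g \<in> B'" using g T by auto
  obtain a b where ab: "ends g = {a, b}" using proper_edgesE[OF proper] gB by blast
  have "connects ends {f\<in>B'. w f < w g} a b"
    using g gB ab unfolding kruskal_tree_def by (auto intro: connects_doubleton)
  from exchange_cheaper_edge[OF T(1) g(1) ab this] obtain h where h: "h \<in> B'" "h \<notin> F" "w h < w g"
    "is_spanning_tree n ends (insert h (F - {g}))" by auto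
  have finF: "finite F" using T unfolding is_spanning_tree_def by auto
  have "sum w (insert h (F - {g})) = sum w F - w g + w h"
    using finF h(2) g(1) by (simp add: sum_diff1)
  then show ?thesis using h T(2) by (intro exI[of _ "insert h (F - {g})"]) auto
qed

lemma kruskal_tree_cheaper_than_cheap:
  assumes T: "is_spanning_tree n ends F" "F \<subseteq> B'" "F \<noteq> kruskal_tree"
  shows "sum w kruskal_tree < sum w F"
proof -
  define TT where "TT = {F. is_spanning_tree n ends F \<and> F \<subseteq> B'}"
  have fin: "finite TT" by (rule finite_subset[of _ "Pow B'"]) (auto simp: TT_def finite_cheap)
  have "kruskal_tree \<in> TT"
    unfolding TT_def using spanning_tree_kruskal_tree kruskal_tree_subset by blast
  then have ne: "TT \<noteq> {}" by blast
  have Fm: "arg_min_on (sum w) TT \<in> TT"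
    "\<And>F. F \<in> TT \<Longrightarrow> sum w (arg_min_on (sum w) TT) \<le> sum w F"
    using arg_min_if_finite(1)[OF fin ne] arg_min_least[OF fin ne] by auto
  have "arg_min_on (sum w) TT = kruskal_tree"
  proof (rule ccontr)
    assume "arg_min_on (sum w) TT \<noteq> kruskal_tree"
    with Fm(1) obtain F' where "F' \<in> TT" "sum w F' < sum w (arg_min_on (sum w) TT)"
      using cheaper_spanning_tree unfolding TT_def by blast
    then show False using Fm(2)[of F'] by simp
  qed
  moreover obtain F' where "F' \<in> TT" "sum w F' < sum w F"
    using cheaper_spanning_tree[OF T] unfolding TT_def by blast
  ultimately show ?thesis using Fm(2)[of F'] by simp
qed

text \<open>Expensive edges are exchanged one at a time for cheap ones; the induction is on their number.\<close>

lemma kruskal_tree_cheaper: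
  assumes "is_spanning_tree n ends F" "F \<subseteq> B" "F \<noteq> kruskal_tree"
  shows "sum w kruskal_tree < sum w F"
  using assms
proof (induction "card (F - B')" arbitrary: F rule: less_induct)
  case less
  show ?case
  proof (cases "F \<subseteq> B'")
    case True then show ?thesis using kruskal_tree_cheaper_than_cheap less.prems by blast
  next
    case False
    then obtain g where g: "g \<in> F" "g \<notin> B'" by blast
    then have gB: "g \<in> B" "w g > c" using less.prems(2) by auto
    then obtain a b where ab: "ends g = {a, b}" "a < n" "b < n" by (metis proper_edgesE[OF proper])
    have "connects ends B' a b" using connects_cheap ab by blast
    moreover have "B' \<subseteq> {f\<in>B'. w f < w g}" using gB(2) by auto
    ultimately have "connects ends {f\<in>B'. w f < w g} a b" by (rule connects_mono[rotated])
    from exchange_cheaper_edge[OF less.prems(1) g(1) ab(1) this] obtain h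
      where h: "h \<in> B'" "h \<notin> F" "w h < w g" "is_spanning_tree n ends (insert h (F - {g}))"
      by blast
    define F' where "F' = insert h (F - {g})"
    have "finite F" using less.prems(1) unfolding is_spanning_tree_def by blast
    then have cost: "sum w F' < sum w F"
      using h(2,3) g(1) unfolding F'_def by (simp add: sum_diff1)
    have "F' - B' = (F - B') - {g}" using h(1) unfolding F'_def by blast
    moreover have "card ((F - B') - {g}) < card (F - B')"
      using \<open>finite F\<close> g by (intro card_Diff1_less) auto
    ultimately have "card (F' - B') < card (F - B')" by simp
    moreover have "F' \<subseteq> B" using h(1) less.prems(2) unfolding F'_def by blast
    ultimately have "sum w kruskal_tree \<le> sum w F'"
      using less.hyps h(4) unfolding F'_def by fastforce
    then show ?thesis using cost by simp
  qed
qed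

lemma is_mst_iff_kruskal_tree: "is_mst n ends w B F \<longleftrightarrow> F = kruskal_tree"
proof -
  have "kruskal_tree \<subseteq> B" using kruskal_tree_subset by blast
  then show ?thesis
    using kruskal_tree_cheaper spanning_tree_kruskal_tree unfolding is_mst_def
    by (metis dual_order.order_iff_strict not_le)
qed

lemma kruskal_tree_cost_le:
  assumes L: "L \<subseteq> B" "\<forall>e\<in>L. w e \<le> t" "t \<le> c" "\<forall>u<n. \<forall>v<n. connects ends L u v"
    and e: "e \<in> kruskal_tree"
  shows "w e \<le> t"
proof (rule ccontr)
  assume "\<not> w e \<le> t"
  then have "L \<subseteq> {f\<in>B'. w f < w e}" using L(1-3) by fastforce
  moreover obtain u v where "ends e = {u, v}" "u < n" "v < n"
    using kruskal_tree_edgeE[OF e] by metis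
  ultimately show False using e L(4) connects_mono unfolding kruskal_tree_def by blast
qed

end

section \<open>Layers of cost\<close>

definition cost_layer :: "nat \<Rightarrow> real \<Rightarrow> nat \<Rightarrow> real set" where
  "cost_layer k c j = {real (j - 1) * (c / real k)<..real j * (c / real k)}"

text \<open>Induction on j: T_1, ..., T_(j-1) only use edges of cost at most (j-1)c/k, so the j-th
  layer survives their removal, and since it connects all vertices it bounds the cost of every
  edge of the Kruskal tree T_j by jc/k.\<close>

lemma msts_if_layers_connected:
  fixes w :: "'e \<Rightarrow> real"
  assumes proper: "proper_edges n ends A"
    and finite: "finite {e\<in>A. w e \<le> c}" and inj: "inj_on w {e\<in>A. w e \<le> c}"
    and k: "k \<ge> 1" and c: "c \<ge> 0"
    and layers: "\<And>j u v. 1 \<le> j \<Longrightarrow> j \<le> k \<Longrightarrow> u < n \<Longrightarrow> v < n \<Longrightarrow>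
       connects ends {e\<in>A. w e \<in> cost_layer k c j} u v"
    and "j \<le> k"
  shows "\<exists>Ts. msts n ends w A j = Some Ts \<and> length Ts = j \<and>
           (\<forall>F\<in>set Ts. F \<subseteq> A \<and> (\<forall>e\<in>F. w e \<le> real j * (c / real k)))"
  using \<open>j \<le> k\<close>
proof (induction j)
  case (Suc j)
  define d where "d = c / real k"
  have d0: "d \<ge> 0" using c k unfolding d_def by simp
  obtain Ts where Ts: "msts n ends w A j = Some Ts" "length Ts = j"
    "\<forall>F\<in>set Ts. F \<subseteq> A \<and> (\<forall>e\<in>F. w e \<le> real j * d)"
    using Suc unfolding d_def by auto
  define B where "B = A - \<Union>(set Ts)"
  define L where "L = {e\<in>A. w e \<in> cost_layer k c (Suc j)}"
  have L_cost: "real j * d < w e" "w e \<le> real (Suc j) * d" if "e \<in> L" for e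
    using that unfolding L_def cost_layer_def d_def by auto
  have LB: "L \<subseteq> B" using Ts(3) L_cost(1) unfolding B_def L_def by fastforce
  have "real (Suc j) * d \<le> real k * d" using Suc.prems d0 by (intro mult_right_mono) auto
  then have top: "real (Suc j) * d \<le> c" using k unfolding d_def by simp
  have cheap_sub: "{e\<in>B. w e \<le> c} \<subseteq> {e\<in>A. w e \<le> c}" unfolding B_def by blast
  have "L \<subseteq> {e\<in>B. w e \<le> c}" using LB L_cost(2) top by force
  moreover have L_conn: "\<forall>u<n. \<forall>v<n. connects ends L u v"
    using layers[of "Suc j"] Suc.prems unfolding L_def by auto
  ultimately interpret cheap_spanning n ends w B c
  proof unfold_locales
    show "proper_edges n ends B" using proper_edges_mono[OF proper] unfolding B_def by blast
    show "finite {e\<in>B. w e \<le> c}" using finite_subset[OF cheap_sub finite] .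
    show "inj_on w {e\<in>B. w e \<le> c}" using inj_on_subset[OF inj cheap_sub] .
  qed (use connects_mono in blast)
  have "\<exists>!F. is_mst n ends w B F" "(THE F. is_mst n ends w B F) = kruskal_tree"
    using is_mst_iff_kruskal_tree by auto
  then have "msts n ends w A (Suc j) = Some (Ts @ [kruskal_tree])"
    using Ts(1) unfolding B_def by (simp add: Let_def)
  moreover have "\<forall>e\<in>kruskal_tree. w e \<le> real (Suc j) * d"
    using kruskal_tree_cost_le[OF LB _ top L_conn] L_cost(2) by blast
  moreover have "real j * d \<le> real (Suc j) * d" using d0 by (simp add: mult_right_mono)
  ultimately show ?case
    using Ts(2,3) kruskal_tree_subset unfolding B_def d_def by fastforce
qed simp

corollary Tk_exists_and_cheap_if_layers_connected:
  fixes w :: "'e \<Rightarrow> real"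
  assumes "proper_edges n ends A"
    and "finite {e\<in>A. w e \<le> c}" and "inj_on w {e\<in>A. w e \<le> c}"
    and k: "k \<ge> 1" and c: "c \<ge> 0"
    and "\<And>j u v. 1 \<le> j \<Longrightarrow> j \<le> k \<Longrightarrow> u < n \<Longrightarrow> v < n \<Longrightarrow>
       connects ends {e\<in>A. w e \<in> cost_layer k c j} u v"
  shows "Tk_exists_and_cheap n ends w A k c"
proof -
  obtain Ts where Ts: "msts n ends w A k = Some Ts" "length Ts = k"
      "\<forall>F\<in>set Ts. \<forall>e\<in>F. w e \<le> real k * (c / real k)"
    using msts_if_layers_connected[OF assms order.refl] by blast
  then have "last Ts \<in> set Ts" using k by (metis last_in_set list.size(3) not_one_le_zero)
  then show ?thesis using Ts k unfolding Tk_exists_and_cheap_def by simp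
qed

section \<open>Measurability of the event\<close>

lemma msts_eq_SomeD: "msts n ends w A j = Some Ts \<Longrightarrow> length Ts = j \<and> set Ts \<subseteq> Fpow A"
proof (induction j arbitrary: Ts)
  case (Suc j)
  then obtain Ts0 where "msts n ends w A j = Some Ts0"
    by (cases "msts n ends w A j") auto
  moreover define B where "B = A - \<Union>(set Ts0)"
  ultimately have ex1: "\<exists>!F. is_mst n ends w B F" and eq: "Ts = Ts0 @ [THE F. is_mst n ends w B F]"
    using Suc.prems by (auto simp: Let_def split: if_splits)
  have "(THE F. is_mst n ends w B F) \<in> Fpow A"
    using theI'[OF ex1] unfolding is_mst_def is_spanning_tree_def Fpow_def B_def by blast
  then show ?case using Suc.IH \<open>msts n ends w A j = Some Ts0\<close> eq by simp
qed simp

text \<open>The quantifiers range over finite edge sets, a countable family when A is countable.\<close>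

lemma msts_Suc_eq_Some_iff:
  "msts n ends w A (Suc j) = Some Ts' \<longleftrightarrow>
   (\<exists>Ts\<in>lists (Fpow A). \<exists>F0\<in>Fpow A. Ts' = Ts @ [F0] \<and> msts n ends w A j = Some Ts \<and>
      is_mst n ends w (A - \<Union>(set Ts)) F0 \<and>
      (\<forall>F\<in>Fpow A. is_mst n ends w (A - \<Union>(set Ts)) F \<longrightarrow> F = F0))"
  (is "_ \<longleftrightarrow> ?rhs")
proof -
  have Fpow: "F \<in> Fpow A" if "is_mst n ends w (A - X) F" for F X
    using that unfolding is_mst_def is_spanning_tree_def Fpow_def by blast
  show ?thesis
  proof
    assume L: "msts n ends w A (Suc j) = Some Ts'"
    then obtain Ts where Ts: "msts n ends w A j = Some Ts"
      by (cases "msts n ends w A j") auto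
    define B where "B = A - \<Union>(set Ts)"
    have ex1: "\<exists>!F. is_mst n ends w B F" and eq: "Ts' = Ts @ [THE F. is_mst n ends w B F]"
      using L Ts unfolding B_def by (auto simp: Let_def split: if_splits)
    then show "\<exists>Ts\<in>lists (Fpow A). \<exists>F0\<in>Fpow A. Ts' = Ts @ [F0] \<and> msts n ends w A j = Some Ts \<and>
      is_mst n ends w (A - \<Union>(set Ts)) F0 \<and>
      (\<forall>F\<in>Fpow A. is_mst n ends w (A - \<Union>(set Ts)) F \<longrightarrow> F = F0)"
      using theI'[OF ex1] Fpow msts_eq_SomeD[OF Ts] Ts unfolding B_def by (auto intro!: bexI[of _ Ts])
  next
    assume ?rhs
    then obtain Ts F0 where R: "Ts' = Ts @ [F0]" "msts n ends w A j = Some Ts"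
      "is_mst n ends w (A - \<Union>(set Ts)) F0"
      "\<forall>F\<in>Fpow A. is_mst n ends w (A - \<Union>(set Ts)) F \<longrightarrow> F = F0" by blast
    then have "\<And>F. is_mst n ends w (A - \<Union>(set Ts)) F \<longleftrightarrow> F = F0" using Fpow by blast
    then have "\<exists>!F. is_mst n ends w (A - \<Union>(set Ts)) F" "(THE F. is_mst n ends w (A - \<Union>(set Ts)) F) = F0"
      by auto
    then show "msts n ends w A (Suc j) = Some Ts'" using R(1,2) by (simp add: Let_def)
  qed
qed

context
  fixes M :: "'x measure" and w :: "'x \<Rightarrow> 'e \<Rightarrow> real" and A :: "'e set"
  assumes countable: "countable A"
    and measurable: "\<And>e. e \<in> A \<Longrightarrow> (\<lambda>X. w X e) \<in> borel_measurable M"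
begin

lemma sets_is_mst:
  assumes "B \<subseteq> A"
  shows "{X \<in> space M. is_mst n ends (w X) B F} \<in> sets M"
proof (cases "F \<subseteq> B \<and> is_spanning_tree n ends F")
  case True
  let ?T = "{F'\<in>Fpow A. F' \<subseteq> B \<and> is_spanning_tree n ends F'}"
  have "F \<in> Fpow A" using True assms unfolding Fpow_def is_spanning_tree_def by blast
  then have sum_meas: "(\<lambda>X. sum (w X) F') \<in> borel_measurable M" if "F' \<in> insert F ?T" for F'
    using that measurable unfolding Fpow_def by (intro borel_measurable_sum) auto
  have "{X \<in> space M. is_mst n ends (w X) B F} =
        {X \<in> space M. \<forall>F'\<in>?T. sum (w X) F \<le> sum (w X) F'}"
    using True assms unfolding is_mst_def Fpow_def is_spanning_tree_def by blast
  also have "\<dots> \<in> sets M"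
    using countable_Fpow[OF countable] sum_meas
    by (intro sets.sets_Collect_countable_All' borel_measurable_le)
      (auto intro: countable_subset[rotated])
  finally show ?thesis .
next
  case False
  then have "{X \<in> space M. is_mst n ends (w X) B F} = {}" unfolding is_mst_def by blast
  then show ?thesis by (metis sets.empty_sets)
qed

lemma sets_msts_eq_Some: "{X \<in> space M. msts n ends (w X) A j = Some Ts} \<in> sets M"
proof (induction j arbitrary: Ts)
  case 0 then show ?case by (cases "Ts = []") auto
next
  case (Suc j)
  have [simp]: "A - X \<subseteq> A" for X by blast
  show ?case
    unfolding msts_Suc_eq_Some_iff
    using countable_Fpow[OF countable] Suc.IH sets_is_mst
    by (intro sets.sets_Collect_countable_Ex' sets.sets_Collect_conj sets.sets_Collect_const
        sets.sets_Collect_countable_All' sets.sets_Collect_imp countable_lists) auto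
qed

lemma sets_Tk_exists_and_cheap:
  assumes "k \<ge> 1"
  shows "{X \<in> space M. Tk_exists_and_cheap n ends (w X) A k c} \<in> sets M"
proof -
  let ?Ts = "lists (Fpow A) - {[]}"
  have "{X \<in> space M. Tk_exists_and_cheap n ends (w X) A k c} =
     {X \<in> space M. \<exists>Ts\<in>?Ts. msts n ends (w X) A k = Some Ts \<and> (\<forall>e\<in>last Ts. w X e \<le> c)}"
    using msts_eq_SomeD assms unfolding Tk_exists_and_cheap_def
    by (fastforce split: option.splits simp: in_lists_conv_set)
  also have "\<dots> \<in> sets M"
  proof (intro sets.sets_Collect_countable_Ex' sets.sets_Collect_conj sets_msts_eq_Some)
    show "countable ?Ts"
      using countable_lists[OF countable_Fpow[OF countable]] by (rule countable_subset[rotated]) blast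
    fix Ts assume "Ts \<in> ?Ts"
    then have "last Ts \<in> Fpow A" by (simp add: in_lists_conv_set)
    then have "countable (last Ts)" "last Ts \<subseteq> A" unfolding Fpow_def by (auto intro: countable_finite)
    then show "{X \<in> space M. \<forall>e\<in>last Ts. w X e \<le> c} \<in> sets M"
      using measurable by (intro sets.sets_Collect_countable_All') auto
  qed
  finally show ?thesis .
qed

end

section \<open>Products of atomless laws\<close>

definition atomless_law :: "real measure \<Rightarrow> bool" where
  "atomless_law P \<longleftrightarrow> prob_space P \<and> sets P = sets borel \<and> (\<forall>x. emeasure P {x} = 0)"

lemma space_atomless_law: "atomless_law P \<Longrightarrow> space P = UNIV"
  unfolding atomless_law_def by (metis sets_eq_imp_space_eq space_borel)

lemma product_prob_space_atomless: "atomless_law P \<Longrightarrow> product_prob_space (\<lambda>_. P)"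
  unfolding atomless_law_def
  by (simp add: product_prob_space_def product_prob_space_axioms_def product_sigma_finite_def
      prob_space_imp_sigma_finite)

lemma prob_space_PiM_atomless: "atomless_law P \<Longrightarrow> prob_space (PiM I (\<lambda>_. P))"
  using product_prob_space_atomless product_prob_space.axioms
  by (metis prob_space_PiM atomless_law_def)

lemma measure_PiM_cylinder:
  assumes atomless: "atomless_law P" and J: "finite J" "J \<subseteq> I" and A: "\<And>j. j \<in> J \<Longrightarrow> A j \<in> sets borel"
  shows "measure (PiM I (\<lambda>_. P)) {X \<in> space (PiM I (\<lambda>_. P)). \<forall>j\<in>J. X j \<in> A j} = (\<Prod>j\<in>J. measure P (A j))"
proof -
  interpret product_prob_space "\<lambda>_. P" I using product_prob_space_atomless[OF atomless] by simp
  have sP: "sets P = sets borel" using atomless unfolding atomless_law_def by simp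
  have "emeasure (PiM I (\<lambda>_. P)) {X \<in> space (PiM I (\<lambda>_. P)). \<forall>j\<in>J. X j \<in> A j} = (\<Prod>j\<in>J. emeasure P (A j))"
    using emeasure_PiM_Collect[of J A, OF J(2,1)] A sP by simp
  then show ?thesis
    using emeasure_eq_measure M.emeasure_eq_measure
    by (simp add: prod_ennreal measure_nonneg prod_nonneg)
qed

lemma sets_PiM_cylinder:
  assumes atomless: "atomless_law P" and J: "finite J" "J \<subseteq> I" and A: "\<And>j. j \<in> J \<Longrightarrow> A j \<in> sets borel"
  shows "{X \<in> space (PiM I (\<lambda>_. P)). \<forall>j\<in>J. X j \<in> A j} \<in> sets (PiM I (\<lambda>_. P))"
proof -
  have sP: "sets P = sets borel" using atomless unfolding atomless_law_def by simp
  show ?thesis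
  proof (rule sets.sets_Collect_finite_All[OF _ J(1)])
    fix j assume "j \<in> J"
    then show "{X \<in> space (PiM I (\<lambda>_. P)). X j \<in> A j} \<in> sets (PiM I (\<lambda>_. P))"
      using J A sP by (intro sets_Collect_single) auto
  qed
qed

lemma null_sets_PiM_coordinate_eq:
  assumes atomless: "atomless_law P" and J: "finite J" "J \<subseteq> I" "i \<in> J"
    and h: "h \<in> borel_measurable (PiM (J - {i}) (\<lambda>_. P))"
  shows "{X \<in> space (PiM I (\<lambda>_. P)). X i = h (restrict X (J - {i}))} \<in> null_sets (PiM I (\<lambda>_. P))"
proof -
  interpret product_prob_space "\<lambda>_. P" I using product_prob_space_atomless[OF atomless] by simp
  have spP: "space P = UNIV" using space_atomless_law[OF atomless] .
  have sP: "sets P = sets borel" using atomless unfolding atomless_law_def by simp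
  let ?J' = "J - {i}"
  have Jeq: "J = insert i ?J'" using J by blast
  define Bs where "Bs = {x \<in> space (PiM J (\<lambda>_. P)). x i = h (restrict x ?J')}"
  have hm: "(\<lambda>x. h (restrict x ?J')) \<in> borel_measurable (PiM J (\<lambda>_. P))"
    using measurable_compose[OF measurable_restrict_subset[of ?J' J "\<lambda>_. P"] h] by blast
  have Bs_sets: "Bs \<in> sets (PiM J (\<lambda>_. P))"
  proof -
    have mc: "measurable (PiM J (\<lambda>_. P)) P = measurable (PiM J (\<lambda>_. P)) borel"
      by (rule measurable_cong_sets[OF refl sP])
    have ci: "(\<lambda>x. x i) \<in> borel_measurable (PiM J (\<lambda>_. P))"
      using measurable_component_singleton[OF J(3), of "\<lambda>_. P"] mc by simp
    show ?thesis unfolding Bs_def by (rule borel_measurable_eq[OF ci hm])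
  qed
  have eqE: "{X \<in> space (PiM I (\<lambda>_. P)). X i = h (restrict X ?J')} = prod_emb I (\<lambda>_. P) J Bs"
  proof -
    have rr: "\<And>X. restrict (restrict X J) ?J' = restrict X ?J'" by (auto simp: restrict_def fun_eq_iff)
    have ri: "\<And>X. restrict X J i = X i" using J(3) by simp
    show ?thesis unfolding Bs_def prod_emb_def vimage_def using J
      by (auto simp only: rr ri mem_Collect_eq Int_iff space_PiM PiE_iff restrict_PiE_iff
          restrict_apply' simp_thms intro: extensional_arb)
  qed
  have "emeasure (PiM J (\<lambda>_. P)) Bs = (\<integral>\<^sup>+x. indicator Bs x \<partial>(PiM J (\<lambda>_. P)))"
    using Bs_sets by simp
  also have "\<dots> = (\<integral>\<^sup>+ x. (\<integral>\<^sup>+ y. indicator Bs (x(i := y)) \<partial>P) \<partial>(PiM ?J' (\<lambda>_. P)))"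
    using product_nn_integral_insert[of ?J' i "indicator Bs"] J Bs_sets Jeq
    by (metis Diff_iff finite_Diff insertI1 borel_measurable_indicator)
  also have "\<dots> = (\<integral>\<^sup>+ x. 0 \<partial>(PiM ?J' (\<lambda>_. P)))"
  proof (rule nn_integral_cong)
    fix x assume x: "x \<in> space (PiM ?J' (\<lambda>_. P))"
    have "\<And>y. indicator Bs (x(i := y)) = (indicator {h x} y :: ennreal)"
    proof -
      fix y
      have r: "restrict (x(i := y)) ?J' = x"
        using x by (auto simp: space_PiM PiE_def extensional_def restrict_def fun_eq_iff)
      have "x(i := y) \<in> space (PiM J (\<lambda>_. P))"
        using x J spP by (auto simp: space_PiM PiE_def extensional_def)
      then show "indicator Bs (x(i := y)) = (indicator {h x} y :: ennreal)"
        unfolding Bs_def using r by (auto simp: indicator_def)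
    qed
    then have "(\<integral>\<^sup>+ y. indicator Bs (x(i := y)) \<partial>P) = (\<integral>\<^sup>+ y. indicator {h x} y \<partial>P)" by simp
    also have "\<dots> = emeasure P {h x}" using sP by (intro nn_integral_indicator) simp
    also have "\<dots> = 0" using atomless unfolding atomless_law_def by simp
    finally show "(\<integral>\<^sup>+ y. indicator Bs (x(i := y)) \<partial>P) = 0" .
  qed
  also have "\<dots> = 0" by simp
  finally have "emeasure (PiM J (\<lambda>_. P)) Bs = 0" .
  then have "emeasure (PiM I (\<lambda>_. P)) (prod_emb I (\<lambda>_. P) J Bs) = 0"
    using emeasure_PiM_emb'[OF J(2,1) Bs_sets] by simp
  moreover have "prod_emb I (\<lambda>_. P) J Bs \<in> sets (PiM I (\<lambda>_. P))"
    using J Bs_sets by (intro measurable_prod_emb) auto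
  ultimately show ?thesis unfolding eqE by (simp add: null_sets_def)
qed

lemma borel_measurable_coordinate:
  assumes atomless: "atomless_law P" and i: "i \<in> I"
  shows "(\<lambda>X. X i) \<in> borel_measurable (PiM I (\<lambda>_. P))"
proof -
  have sP: "sets P = sets borel" using atomless unfolding atomless_law_def by simp
  have "measurable (PiM I (\<lambda>_. P)) P = measurable (PiM I (\<lambda>_. P)) borel"
    by (rule measurable_cong_sets[OF refl sP])
  then show ?thesis using measurable_component_singleton[OF i, of "\<lambda>_. P"] by simp
qed

lemma null_sets_PiM_coordinates_eq:
  assumes atomless: "atomless_law P" and pq: "p \<in> I" "q \<in> I" "p \<noteq> q"
  shows "{X \<in> space (PiM I (\<lambda>_. P)). X p = X q} \<in> null_sets (PiM I (\<lambda>_. P))"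
proof -
  have J: "finite {p, q}" "{p, q} \<subseteq> I" "p \<in> {p, q}" using pq by auto
  have e: "{p, q} - {p} = {q}" using pq by auto
  have h: "(\<lambda>x. x q) \<in> borel_measurable (PiM ({p, q} - {p}) (\<lambda>_. P))"
    unfolding e by (rule borel_measurable_coordinate[OF atomless]) simp
  have "{X \<in> space (PiM I (\<lambda>_. P)). X p = restrict X ({p, q} - {p}) q} \<in> null_sets (PiM I (\<lambda>_. P))"
    by (rule null_sets_PiM_coordinate_eq[OF atomless J h])
  moreover have "\<And>X. restrict X ({p, q} - {p}) q = X q" using pq by simp
  ultimately show ?thesis using pq(3) by (simp add: eq_commute[of q p])
qed

abbreviation "exp_law \<equiv> density lborel (exponential_density 1)"
abbreviation "unif_law \<equiv> uniform_measure lborel {0<..<(1::real)}"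

lemma atomless_exp_law: "atomless_law exp_law"
  unfolding atomless_law_def
proof (intro conjI allI)
  show "prob_space exp_law" by (rule prob_space_exponential_density) simp
  show "sets exp_law = sets borel" by simp
  fix x :: real
  have "emeasure exp_law {x} = (\<integral>\<^sup>+ y. ennreal (exponential_density 1 y) * indicator {x} y \<partial>lborel)"
    by (rule emeasure_density) auto
  also have "\<dots> = 0" by (rule nn_integral_null_set) auto
  finally show "emeasure exp_law {x} = 0" .
qed

lemma atomless_unif_law: "atomless_law unif_law"
  unfolding atomless_law_def
proof (intro conjI allI)
  show "prob_space unif_law" by (rule prob_space_uniform_measure) auto
  show "sets unif_law = sets borel" by simp
  fix x :: real
  have "emeasure unif_law {x} = emeasure lborel ({0<..<1} \<inter> {x}) / emeasure lborel {0<..<(1::real)}"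
    by (rule emeasure_uniform_measure) auto
  also have "emeasure lborel ({0<..<1} \<inter> {x}) = 0"
  proof -
    have "emeasure lborel ({0<..<1} \<inter> {x}) \<le> emeasure lborel {x}" by (rule emeasure_mono) auto
    then show ?thesis by simp
  qed
  finally show "emeasure unif_law {x} = 0" by simp
qed

lemma measure_exp_law_atMost: "0 \<le> a \<Longrightarrow> measure exp_law {..a} = 1 - exp (- a)"
proof -
  assume a: "0 \<le> a"
  have "emeasure exp_law {..a} = ennreal (erlang_CDF 0 1 a)" by (rule emeasure_erlang_density) simp
  then have "emeasure exp_law {..a} = ennreal (1 - exp (- a))" using a by (simp add: erlang_CDF_def)
  then show ?thesis using a by (simp add: measure_def)
qed

lemma measure_exp_law_atMost_0: "measure exp_law {..0} = 0"
  using measure_exp_law_atMost[of 0] by simp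

lemma measure_exp_law_Ioc: "0 \<le> a \<Longrightarrow> a \<le> b \<Longrightarrow> measure exp_law {a<..b} = exp (- a) - exp (- b)"
proof -
  assume ab: "0 \<le> a" "a \<le> b"
  interpret prob_space exp_law by (rule prob_space_exponential_density) simp
  have "{a<..b} = {..b} - {..a}" by auto
  then have "measure exp_law {a<..b} = measure exp_law {..b} - measure exp_law {..a}"
    using ab by (simp add: finite_measure_Diff)
  then show ?thesis using measure_exp_law_atMost ab by simp
qed

lemma measure_unif_law_Ioc: "0 \<le> a \<Longrightarrow> a \<le> b \<Longrightarrow> b < 1 \<Longrightarrow> measure unif_law {a<..b} = b - a"
proof -
  assume ab: "0 \<le> a" "a \<le> b" "b < 1"
  have "{0<..<1} \<inter> {a<..b} = {a<..b}" using ab by auto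
  then have "measure unif_law {a<..b} = measure lborel {a<..b} / measure lborel {0<..<(1::real)}"
    by (subst measure_uniform_measure) auto
  then show ?thesis using ab by simp
qed


lemma null_sets_PiM_not_inj:
  assumes atomless: "atomless_law P" and "finite I"
  shows "{X \<in> space (PiM I (\<lambda>_. P)). \<not> inj_on X I} \<in> null_sets (PiM I (\<lambda>_. P))"
proof -
  have "{X \<in> space (PiM I (\<lambda>_. P)). \<not> inj_on X I} =
    (\<Union>p\<in>I. \<Union>q\<in>I - {p}. {X \<in> space (PiM I (\<lambda>_. P)). X p = X q})"
    unfolding inj_on_def by blast
  also have "\<dots> \<in> null_sets (PiM I (\<lambda>_. P))"
    using assms null_sets_PiM_coordinates_eq[OF atomless, of _ I]
    by (intro null_sets_UN' countable_finite) (auto simp: eq_commute)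
  finally show ?thesis .
qed

section \<open>Connectivity of random graphs\<close>

definition cut_pairs :: "nat \<Rightarrow> nat set \<Rightarrow> (nat \<times> nat) set" where
  "cut_pairs n S = {(i, j). i < j \<and> j < n \<and> (i \<in> S \<longleftrightarrow> j \<notin> S)}"

lemma cut_pairs_subset: "cut_pairs n S \<subseteq> vpairs n"
  unfolding cut_pairs_def vpairs_def by auto

lemma finite_vpairs: "finite (vpairs n)"
  unfolding vpairs_def by (rule finite_subset[of _ "{..<n} \<times> {..<n}"]) auto

lemma card_cut_pairs:
  assumes S: "S \<subseteq> {..<n}"
  shows "card (cut_pairs n S) = card S * (n - card S)"
proof -
  define f where "f = (\<lambda>(a::nat, b::nat). (min a b, max a b))"
  have inj: "inj_on f (S \<times> ({..<n} - S))"
  proof (rule inj_onI)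
    fix x y assume x: "x \<in> S \<times> ({..<n} - S)" and y: "y \<in> S \<times> ({..<n} - S)" and e: "f x = f y"
    obtain a b where ab: "x = (a, b)" "a \<in> S" "b \<notin> S" using x by auto
    obtain a' b' where ab': "y = (a', b')" "a' \<in> S" "b' \<notin> S" using y by auto
    have "min a b = min a' b'" "max a b = max a' b'" using e ab ab' unfolding f_def by auto
    then have "a = a' \<and> b = b'" using ab ab' by (metis max_def min_def)
    then show "x = y" using ab ab' by simp
  qed
  have img: "f ` (S \<times> ({..<n} - S)) = cut_pairs n S"
  proof
    show "f ` (S \<times> ({..<n} - S)) \<subseteq> cut_pairs n S"
    proof
      fix p assume "p \<in> f ` (S \<times> ({..<n} - S))"
      then obtain a b where ab: "p = f (a, b)" "a \<in> S" "b < n" "b \<notin> S" by auto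
      have "a < n" using ab S by auto
      have "a \<noteq> b" using ab by auto
      then show "p \<in> cut_pairs n S" using ab \<open>a < n\<close> unfolding f_def cut_pairs_def by (auto simp: min_def max_def)
    qed
  next
    show "cut_pairs n S \<subseteq> f ` (S \<times> ({..<n} - S))"
    proof
      fix p assume p: "p \<in> cut_pairs n S"
      then obtain i j where ij: "p = (i, j)" "i < j" "j < n" "i \<in> S \<longleftrightarrow> j \<notin> S" unfolding cut_pairs_def by auto
      show "p \<in> f ` (S \<times> ({..<n} - S))"
      proof (cases "i \<in> S")
        case True
        then have "(i, j) \<in> S \<times> ({..<n} - S)" using ij by auto
        moreover have "f (i, j) = p" using ij unfolding f_def by auto
        ultimately show ?thesis by force
      next
        case False
        then have "(j, i) \<in> S \<times> ({..<n} - S)" using ij by auto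
        moreover have "f (j, i) = p" using ij unfolding f_def by auto
        ultimately show ?thesis by force
      qed
    qed
  qed
  have "card (cut_pairs n S) = card (S \<times> ({..<n} - S))" using card_image[OF inj] img by simp
  also have "\<dots> = card S * card ({..<n} - S)" by (rule card_cartesian_product)
  also have "card ({..<n} - S) = n - card S" using S by (simp add: card_Diff_subset finite_subset)
  finally show ?thesis .
qed

definition small_cuts :: "nat \<Rightarrow> nat set set" where
  "small_cuts n = {S. S \<subseteq> {..<n} \<and> S \<noteq> {} \<and> 2 * card S \<le> n}"

lemma connects_if_every_cut_hit:
  fixes L :: "'e set"
  assumes cut: "\<forall>S\<in>small_cuts n. \<exists>p\<in>cut_pairs n S. R p"
    and edge: "\<And>p. p \<in> vpairs n \<Longrightarrow> R p \<Longrightarrow> connects ends L (fst p) (snd p)"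
    and uv: "u < n" "v < n"
  shows "connects ends L u v"
proof (rule ccontr)
  assume nc: "\<not> connects ends L u v"
  define C where "C = {x. x < n \<and> connects ends L u x}"
  have CV: "C \<subseteq> {..<n}" unfolding C_def by auto
  have uC: "u \<in> C" using uv unfolding C_def by simp
  have vC: "v \<notin> C" using nc unfolding C_def by simp
  define D where "D = {..<n} - C"
  have vD: "v \<in> D" using vC uv unfolding D_def by simp
  have finC: "finite C" using CV finite_subset by blast
  have cardD: "card D = n - card C" unfolding D_def using CV finC by (simp add: card_Diff_subset)
  have cardC: "card C \<le> n" using CV by (metis card_lessThan card_mono finite_lessThan)
  have closed: "\<And>i j. (i, j) \<in> vpairs n \<Longrightarrow> R (i, j) \<Longrightarrow> (i \<in> C \<longleftrightarrow> j \<in> C)"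
  proof -
    fix i j assume ij: "(i, j) \<in> vpairs n" "R (i, j)"
    have c: "connects ends L i j" using edge[OF ij] by simp
    have n: "i < n" "j < n" using ij(1) unfolding vpairs_def by auto
    show "i \<in> C \<longleftrightarrow> j \<in> C"
      using c connects_sym[OF c] connects_trans n unfolding C_def by blast
  qed
  show False
  proof (cases "2 * card C \<le> n")
    case True
    obtain p where p: "p \<in> cut_pairs n C" "R p" using cut CV True uC unfolding small_cuts_def by blast
    obtain i j where ij: "p = (i, j)" by (cases p)
    have "(i, j) \<in> vpairs n" using p(1) ij cut_pairs_subset by blast
    then show False using closed p ij unfolding cut_pairs_def by auto
  next
    case False
    have "2 * card D \<le> n" using False cardD cardC by simp
    moreover have "D \<subseteq> {..<n}" "D \<noteq> {}" using vD unfolding D_def by auto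
    ultimately obtain p where p: "p \<in> cut_pairs n D" "R p" using cut unfolding small_cuts_def by blast
    obtain i j where ij: "p = (i, j)" by (cases p)
    have v: "(i, j) \<in> vpairs n" using p(1) ij cut_pairs_subset by blast
    then have "i < n" "j < n" unfolding vpairs_def by auto
    then show False using closed[OF v] p ij unfolding cut_pairs_def D_def by auto
  qed
qed

definition cut_miss_bound :: "nat \<Rightarrow> nat \<Rightarrow> real" where
  "cut_miss_bound n s = exp (- (3/2) * ln (real n) / real n * (real s * real (n - s)))"

definition disconnection_bound :: "nat \<Rightarrow> real" where
  "disconnection_bound n = (\<Sum>S\<in>small_cuts n. cut_miss_bound n (card S))"

lemma finite_small_cuts: "finite (small_cuts n)"
  unfolding small_cuts_def by (rule finite_subset[of _ "Pow {..<n}"]) auto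

lemma disconnection_bound_le_binomial_sum:
  "disconnection_bound n \<le> (\<Sum>s\<in>{1..n}. if 2 * s \<le> n then real (n choose s) * cut_miss_bound n s else 0)"
proof -
  have fin: "finite (small_cuts n)" by (rule finite_small_cuts)
  have img: "card ` small_cuts n \<subseteq> {1..n}"
  proof
    fix s assume "s \<in> card ` small_cuts n"
    then obtain S where S: "S \<in> small_cuts n" "s = card S" by auto
    then have "S \<subseteq> {..<n}" "S \<noteq> {}" unfolding small_cuts_def by auto
    moreover have "finite S" using \<open>S \<subseteq> {..<n}\<close> finite_subset by blast
    ultimately have "1 \<le> card S" "card S \<le> n"
      by (auto simp: Suc_le_eq card_gt_0_iff) (metis card_lessThan card_mono finite_lessThan)
    then show "s \<in> {1..n}" using S by auto
  qed
  have "disconnection_bound n = (\<Sum>s\<in>{1..n}. \<Sum>S\<in>{S. S \<in> small_cuts n \<and> card S = s}. cut_miss_bound n (card S))"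
    unfolding disconnection_bound_def by (rule sum.group[OF fin _ img, symmetric]) simp
  also have "\<dots> = (\<Sum>s\<in>{1..n}. real (card {S. S \<in> small_cuts n \<and> card S = s}) * cut_miss_bound n s)"
    by (intro sum.cong refl) simp
  also have "\<dots> \<le> (\<Sum>s\<in>{1..n}. if 2 * s \<le> n then real (n choose s) * cut_miss_bound n s else 0)"
  proof (rule sum_mono)
    fix s assume "s \<in> {1..n}"
    show "real (card {S. S \<in> small_cuts n \<and> card S = s}) * cut_miss_bound n s \<le>
      (if 2 * s \<le> n then real (n choose s) * cut_miss_bound n s else 0)"
    proof (cases "2 * s \<le> n")
      case False
      then have e: "{S. S \<in> small_cuts n \<and> card S = s} = {}" unfolding small_cuts_def by auto
      show ?thesis unfolding e using False by simp
    next
      case True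
      have "{S. S \<in> small_cuts n \<and> card S = s} \<subseteq> {S. S \<subseteq> {..<n} \<and> card S = s}"
        unfolding small_cuts_def by auto
      then have "card {S. S \<in> small_cuts n \<and> card S = s} \<le> card {S. S \<subseteq> {..<n} \<and> card S = s}"
        by (rule card_mono[rotated]) (rule finite_subset[of _ "Pow {..<n}"], auto)
      also have "\<dots> = n choose s" using n_subsets[of "{..<n}" s] by simp
      finally show ?thesis
        using True unfolding cut_miss_bound_def by (simp add: mult_right_mono)
    qed
  qed
  finally show ?thesis .
qed

text \<open>Cuts with 4s \<le> n are paid for by n choose s \<le> n^s, larger ones by s(n-s) \<ge> n^2/8.\<close>

lemma binomial_cut_term_le:
  assumes n: "2 \<le> n" and s: "1 \<le> s" "2 * s \<le> n"
  shows "real (n choose s) * cut_miss_bound n s \<le>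
     exp (- ln (real n) / 8) ^ s + real (n choose s) * exp (- (3/16) * real n * ln (real n))"
proof -
  define L where "L = ln (real n)"
  define N where "N = real n"
  have L0: "L > 0" using n unfolding L_def by simp
  have N0: "N \<ge> 2" using n unfolding N_def by simp
  have nsr: "real (n - s) = N - real s" using s unfolding N_def by simp
  have g: "cut_miss_bound n s = exp (- (3/2) * L / N * (real s * (N - real s)))"
    unfolding cut_miss_bound_def L_def N_def using nsr N_def by simp
  have c0: "real (n choose s) \<ge> 0" by simp
  have s2: "2 * real s \<le> N" using s(2) unfolding N_def by linarith
  show ?thesis
  proof (cases "4 * s \<le> n")
    case True
    have s4: "4 * real s \<le> N" using True unfolding N_def by linarith
    have "real (n choose s) \<le> real n ^ s" using binomial_le_pow[of s n] s
      by (metis of_nat_le_iff of_nat_power le_trans mult_le_cancel2 nat_le_linear one_le_mult_iff Suc_1 le_add2 mult_2 add_leD2)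
    also have "real n ^ s = exp (real s * L)" unfolding L_def using n by (simp add: exp_of_nat_mult)
    finally have b1: "real (n choose s) \<le> exp (real s * L)" .
    have "(9/8) * real s * L \<le> (3/2) * L / N * (real s * (N - real s))"
    proof -
      have "(3/4) * N \<le> N - real s" using s4 by simp
      then have "real s * ((3/4) * N) \<le> real s * (N - real s)" by (intro mult_left_mono) auto
      moreover have "0 \<le> (3/2) * L / N" using L0 N0 by simp
      ultimately have "(3/2) * L / N * (real s * ((3/4) * N)) \<le> (3/2) * L / N * (real s * (N - real s))"
        by (rule mult_left_mono)
      moreover have "(3/2) * L / N * (real s * ((3/4) * N)) = (9/8) * real s * L" using N0 by (simp add: field_simps)
      ultimately show ?thesis by simp
    qed
    then have b2: "cut_miss_bound n s \<le> exp (- (9/8) * real s * L)" unfolding g by simp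
    have "real (n choose s) * cut_miss_bound n s \<le> exp (real s * L) * exp (- (9/8) * real s * L)"
      using b1 b2 c0 by (intro mult_mono) (auto simp: cut_miss_bound_def)
    also have "\<dots> = exp (- L / 8) ^ s" by (simp add: exp_add[symmetric] exp_of_nat_mult[symmetric] algebra_simps)
    finally have "real (n choose s) * cut_miss_bound n s \<le> exp (- L / 8) ^ s" .
    moreover have "0 \<le> real (n choose s) * exp (- (3/16) * N * L)" by simp
    ultimately show ?thesis unfolding L_def N_def by linarith
  next
    case False
    have s4: "4 * real s \<ge> N" using False unfolding N_def by linarith
    have "(3/16) * N * L \<le> (3/2) * L / N * (real s * (N - real s))"
    proof -
      have h1: "N / 4 \<le> real s" using s4 by simp
      have h2: "N / 2 \<le> N - real s" using s2 by simp
      have "(N / 4) * (N / 2) \<le> real s * (N - real s)" using h1 h2 N0 by (intro mult_mono) auto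
      moreover have "0 \<le> (3/2) * L / N" using L0 N0 by simp
      ultimately have "(3/2) * L / N * ((N / 4) * (N / 2)) \<le> (3/2) * L / N * (real s * (N - real s))"
        by (rule mult_left_mono)
      moreover have "(3/2) * L / N * ((N / 4) * (N / 2)) = (3/16) * N * L" using N0 by (simp add: field_simps)
      ultimately show ?thesis by simp
    qed
    then have "cut_miss_bound n s \<le> exp (- (3/16) * N * L)" unfolding g by simp
    then have "real (n choose s) * cut_miss_bound n s \<le> real (n choose s) * exp (- (3/16) * N * L)"
      using c0 by (rule mult_left_mono)
    moreover have "0 \<le> exp (- L / 8) ^ s" by simp
    ultimately show ?thesis unfolding L_def N_def by linarith
  qed
qed

lemma disconnection_bound_le:
  assumes n: "2 \<le> n"
  shows "disconnection_bound n \<le> exp (- ln (real n) / 8) / (1 - exp (- ln (real n) / 8)) +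
                 2 ^ n * exp (- (3/16) * real n * ln (real n))"
proof -
  define r where "r = exp (- ln (real n) / 8)"
  define E where "E = exp (- (3/16) * real n * ln (real n))"
  have r0: "0 < r" unfolding r_def by simp
  have r1: "r < 1" unfolding r_def using n by simp
  have E0: "0 \<le> E" unfolding E_def by simp
  have "disconnection_bound n \<le> (\<Sum>s\<in>{1..n}. if 2 * s \<le> n then real (n choose s) * cut_miss_bound n s else 0)" by (rule disconnection_bound_le_binomial_sum)
  also have "\<dots> \<le> (\<Sum>s\<in>{1..n}. r ^ s + real (n choose s) * E)"
  proof (rule sum_mono)
    fix s assume s: "s \<in> {1..n}"
    show "(if 2 * s \<le> n then real (n choose s) * cut_miss_bound n s else 0) \<le> r ^ s + real (n choose s) * E"
    proof (cases "2 * s \<le> n")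
      case True then show ?thesis using binomial_cut_term_le[OF n _ True] s unfolding r_def E_def by simp
    next
      case False then show ?thesis using r0 E0 by simp
    qed
  qed
  also have "\<dots> = (\<Sum>s\<in>{1..n}. r ^ s) + E * (\<Sum>s\<in>{1..n}. real (n choose s))"
    by (simp add: sum.distrib sum_distrib_left mult.commute)
  also have "(\<Sum>s\<in>{1..n}. r ^ s) \<le> r / (1 - r)"
  proof -
    have "(\<Sum>s\<in>{1..n}. r ^ s) = (\<Sum>i<n. r ^ Suc i)"
      by (rule sum.reindex_bij_witness[of _ Suc "\<lambda>s. s - 1"]) auto
    also have "\<dots> = r * (\<Sum>i<n. r ^ i)" by (simp add: sum_distrib_left)
    also have "(\<Sum>i<n. r ^ i) = (1 - r ^ n) / (1 - r)" using r1 by (simp add: sum_gp_strict)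
    also have "r * ((1 - r ^ n) / (1 - r)) \<le> r / (1 - r)"
      using r0 r1 by (simp add: divide_right_mono mult_left_le)
    finally show ?thesis .
  qed
  also have "(\<Sum>s\<in>{1..n}. real (n choose s)) \<le> 2 ^ n"
  proof -
    have "(\<Sum>s\<in>{1..n}. real (n choose s)) \<le> (\<Sum>s\<le>n. real (n choose s))"
      by (rule sum_mono2) auto
    also have "\<dots> = 2 ^ n" using choose_row_sum[of n] by (metis of_nat_numeral of_nat_power of_nat_sum)
    finally show ?thesis .
  qed
  then have "E * (\<Sum>s\<in>{1..n}. real (n choose s)) \<le> E * 2 ^ n" using E0 by (rule mult_left_mono)
  finally show ?thesis unfolding r_def E_def by (simp add: mult.commute)
qed

lemma disconnection_bound_tendsto_0: "disconnection_bound \<longlonglongrightarrow> 0"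
proof (rule tendsto_sandwich[of "\<lambda>_. 0" _ _ "\<lambda>n. exp (- ln (real n) / 8) / (1 - exp (- ln (real n) / 8)) +
                 2 ^ n * exp (- (3/16) * real n * ln (real n))"])
  show "\<forall>\<^sub>F n in sequentially. 0 \<le> disconnection_bound n"
    unfolding disconnection_bound_def cut_miss_bound_def by (intro always_eventually allI sum_nonneg) simp
  show "\<forall>\<^sub>F n in sequentially. disconnection_bound n \<le> exp (- ln (real n) / 8) / (1 - exp (- ln (real n) / 8)) +
                 2 ^ n * exp (- (3/16) * real n * ln (real n))"
    using eventually_ge_at_top[of 2] by eventually_elim (rule disconnection_bound_le)
  show "(\<lambda>_. 0) \<longlonglongrightarrow> (0::real)" by simp
  show "(\<lambda>n. exp (- ln (real n) / 8) / (1 - exp (- ln (real n) / 8)) +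
                 2 ^ n * exp (- (3/16) * real n * ln (real n))) \<longlonglongrightarrow> 0"
    by real_asymp
qed

lemma power_cut_miss_le:
  fixes q :: real
  assumes q1: "q \<le> 1" and q: "3/2 * ln (real n) / real n \<le> q" and n: "2 \<le> n"
  shows "(1 - q) ^ (s * (n - s)) \<le> cut_miss_bound n s"
proof -
  have "1 - q \<le> exp (- q)" using exp_ge_add_one_self[of "- q"] by simp
  then have "(1 - q) ^ (s * (n - s)) \<le> exp (- q) ^ (s * (n - s))"
    using q1 by (intro power_mono) auto
  also have "\<dots> = exp (- q * real (s * (n - s)))" by (simp add: exp_of_nat_mult[symmetric] mult.commute)
  also have "\<dots> \<le> exp (- (3/2 * ln (real n) / real n) * real (s * (n - s)))"
    using q by (intro exp_mono mult_right_mono) auto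
  also have "\<dots> = cut_miss_bound n s" unfolding cut_miss_bound_def by simp
  finally show ?thesis .
qed

lemma measure_cut_missed_le:
  fixes idx :: "nat \<times> nat \<Rightarrow> 'i"
  assumes atomless: "atomless_law P" and inj: "inj_on idx (vpairs n)" and sub: "idx ` vpairs n \<subseteq> I"
    and Iv: "Iv \<in> sets borel" and q: "3/2 * ln (real n) / real n \<le> measure P Iv" and n: "2 \<le> n"
  shows "{X \<in> space (PiM I (\<lambda>_. P)). \<exists>S\<in>small_cuts n. \<forall>p\<in>cut_pairs n S. X (idx p) \<notin> Iv} \<in> sets (PiM I (\<lambda>_. P))"
    and "measure (PiM I (\<lambda>_. P)) {X \<in> space (PiM I (\<lambda>_. P)). \<exists>S\<in>small_cuts n. \<forall>p\<in>cut_pairs n S. X (idx p) \<notin> Iv} \<le> disconnection_bound n"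
proof -
  let ?M = "PiM I (\<lambda>_. P)"
  interpret P: prob_space P using atomless unfolding atomless_law_def by simp
  have spP: "space P = UNIV" by (rule space_atomless_law[OF atomless])
  have sP: "sets P = sets borel" using atomless unfolding atomless_law_def by simp
  define missed where "missed S = {X \<in> space ?M. \<forall>j\<in>idx ` cut_pairs n S. X j \<in> UNIV - Iv}" for S
  have eq: "{X \<in> space ?M. \<exists>S\<in>small_cuts n. \<forall>p\<in>cut_pairs n S. X (idx p) \<notin> Iv} = (\<Union>S\<in>small_cuts n. missed S)"
    unfolding missed_def by auto
  have finJ: "finite (idx ` cut_pairs n S)" for S
    using finite_subset[OF cut_pairs_subset finite_vpairs] by blast
  have subJ: "idx ` cut_pairs n S \<subseteq> I" for S using sub cut_pairs_subset by blast
  have Ivc: "UNIV - Iv \<in> sets borel" using Iv by auto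
  have missed_sets: "missed S \<in> sets ?M" for S
    unfolding missed_def by (rule sets_PiM_cylinder[OF atomless finJ subJ Ivc])
  have q1: "measure P Iv \<le> 1" by (rule P.prob_le_1)
  have mc: "measure P (UNIV - Iv) = 1 - measure P Iv"
    using P.prob_compl[of Iv] Iv sP spP by simp
  have missed_measure: "measure ?M (missed S) \<le> cut_miss_bound n (card S)" if S: "S \<in> small_cuts n" for S
  proof -
    have SV: "S \<subseteq> {..<n}" using S unfolding small_cuts_def by auto
    have "measure ?M (missed S) = (\<Prod>j\<in>idx ` cut_pairs n S. measure P (UNIV - Iv))"
      unfolding missed_def by (rule measure_PiM_cylinder[OF atomless finJ subJ Ivc])
    also have "\<dots> = (1 - measure P Iv) ^ card (idx ` cut_pairs n S)" using mc by simp
    also have "card (idx ` cut_pairs n S) = card (cut_pairs n S)"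
      by (rule card_image) (rule inj_on_subset[OF inj cut_pairs_subset])
    also have "\<dots> = card S * (n - card S)" by (rule card_cut_pairs[OF SV])
    finally show ?thesis using power_cut_miss_le[OF q1 q n] by simp
  qed
  show "{X \<in> space ?M. \<exists>S\<in>small_cuts n. \<forall>p\<in>cut_pairs n S. X (idx p) \<notin> Iv} \<in> sets ?M"
    unfolding eq using finite_small_cuts missed_sets by (intro sets.finite_UN) auto
  have "measure ?M (\<Union>S\<in>small_cuts n. missed S) \<le> (\<Sum>S\<in>small_cuts n. measure ?M (missed S))"
    by (rule measure_UNION_le[OF finite_small_cuts missed_sets])
  also have "\<dots> \<le> (\<Sum>S\<in>small_cuts n. cut_miss_bound n (card S))" by (rule sum_mono) (rule missed_measure)
  finally show "measure ?M {X \<in> space ?M. \<exists>S\<in>small_cuts n. \<forall>p\<in>cut_pairs n S. X (idx p) \<notin> Iv} \<le> disconnection_bound n"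
    unfolding eq disconnection_bound_def .
qed


section \<open>The three models\<close>

lemma proper_edges_vpairs: "proper_edges n pair_ends (vpairs n)"
  unfolding proper_edges_def
proof
  fix e assume "e \<in> vpairs n"
  then obtain a b where "e = (a, b)" "a < b" "b < n" unfolding vpairs_def by auto
  then show "\<exists>u v. u \<noteq> v \<and> u < n \<and> v < n \<and> pair_ends e = {u, v}"
    unfolding pair_ends_def by (intro exI[of _ a] exI[of _ b]) auto
qed

lemma connects_cost_layer_if_cuts_hit:
  assumes hit: "\<forall>S\<in>small_cuts n. \<exists>p\<in>cut_pairs n S. w (edge p) \<in> L"
    and edge: "\<And>p. p \<in> vpairs n \<Longrightarrow> edge p \<in> A \<and> ends (edge p) = {fst p, snd p}"
    and "u < n" "v < n"
  shows "connects ends {e\<in>A. w e \<in> L} u v"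
proof (rule connects_if_every_cut_hit[where R = "\<lambda>p. w (edge p) \<in> L"])
  fix p assume "p \<in> vpairs n" "w (edge p) \<in> L"
  moreover have "fst p \<noteq> snd p" using \<open>p \<in> vpairs n\<close> unfolding vpairs_def by auto
  ultimately show "connects ends {e\<in>A. w e \<in> L} (fst p) (snd p)"
    using edge by (intro connects_edge[of "edge p"]) auto
qed (use assms in auto)

lemma measure_ge_if_complement_covered:
  assumes "prob_space M" "E \<in> sets M" "N \<in> null_sets M" "B \<in> sets M"
    and "finite J" "\<And>j. j \<in> J \<Longrightarrow> C j \<in> sets M"
    and cover: "space M - E \<subseteq> N \<union> B \<union> (\<Union>j\<in>J. C j)"
  shows "1 - (measure M B + (\<Sum>j\<in>J. measure M (C j))) \<le> measure M E"
proof -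
  interpret prob_space M by fact
  have N: "N \<in> sets M" "measure M N = 0" using assms(3) by (auto simp: measure_def null_setsD1)
  have C: "(\<Union>j\<in>J. C j) \<in> sets M" using assms(5,6) by (intro sets.finite_UN) auto
  have "measure M (space M - E) \<le> measure M (N \<union> B \<union> (\<Union>j\<in>J. C j))"
    using cover N C assms(4) by (intro finite_measure_mono) auto
  also have "\<dots> \<le> measure M (N \<union> B) + measure M (\<Union>j\<in>J. C j)"
    using N C assms(4) by (intro measure_Un_le) auto
  also have "measure M (N \<union> B) \<le> measure M N + measure M B"
    using N assms(4) by (intro measure_Un_le) auto
  also have "measure M (\<Union>j\<in>J. C j) \<le> (\<Sum>j\<in>J. measure M (C j))"
    using assms(5,6) by (intro measure_UNION_le) auto
  finally show ?thesis using N prob_compl[OF assms(2)] by simp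
qed

lemma tendsto_1_if_lower_bound:
  fixes f b :: "nat \<Rightarrow> real"
  assumes "\<forall>\<^sub>F n in sequentially. 1 - b n \<le> f n" "\<And>n. f n \<le> 1" "b \<longlonglongrightarrow> 0"
  shows "f \<longlonglongrightarrow> 1"
proof (rule tendsto_sandwich[of "\<lambda>n. 1 - b n" _ _ "\<lambda>_. 1"])
  show "(\<lambda>n. 1 - b n) \<longlonglongrightarrow> 1" using tendsto_diff[OF tendsto_const \<open>b \<longlonglongrightarrow> 0\<close>, of 1] by simp
qed (use assms in auto)

lemma thr_nonneg: "0 \<le> thr k n"
  unfolding thr_def by (cases "n = 0") auto

lemma eventually_thr_le: "\<forall>\<^sub>F n in sequentially. thr k n \<le> 1/8"
proof -
  have "(\<lambda>n. 2 * real k * (ln (real n) / real n)) \<longlonglongrightarrow> 0"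
    by (rule tendsto_mult_right_zero) real_asymp
  moreover have "(\<lambda>n. thr k n) = (\<lambda>n. 2 * real k * (ln (real n) / real n))"
    unfolding thr_def by auto
  ultimately have "\<forall>\<^sub>F n in sequentially. thr k n < 1/8" by (intro order_tendstoD(2)) auto
  then show ?thesis by (rule eventually_mono) simp
qed

lemma cost_layer_thr:
  assumes "1 \<le> j" "j \<le> k" "2 \<le> n"
  defines "d \<equiv> 2 * ln (real n) / real n"
  shows "cost_layer k (thr k n) j = {real (j - 1) * d<..real (j - 1) * d + d}"
    and "0 \<le> real (j - 1) * d" and "real (j - 1) * d + d \<le> thr k n"
proof -
  have d0: "0 \<le> d" unfolding d_def using assms by simp
  have c: "thr k n / real k = d" unfolding thr_def d_def using assms by simp
  obtain i where i: "j = Suc i" using assms(1) by (cases j) auto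
  then show "cost_layer k (thr k n) j = {real (j - 1) * d<..real (j - 1) * d + d}"
    unfolding cost_layer_def c by (simp add: distrib_right add.commute)
  show "0 \<le> real (j - 1) * d" using d0 by simp
  have "real (j - 1) * d + d = real j * d" using i by (simp add: distrib_right)
  also have "\<dots> \<le> real k * d" using assms d0 by (intro mult_right_mono) auto
  also have "\<dots> = thr k n" using c assms by (simp add: field_simps)
  finally show "real (j - 1) * d + d \<le> thr k n" .
qed

lemma simple_Tk_exists_and_cheap_if_layers_hit:
  fixes X :: "nat \<times> nat \<Rightarrow> real"
  assumes "inj_on X (vpairs n)" "k \<ge> 1" "c \<ge> 0"
    and hit: "\<forall>j\<in>{1..k}. \<forall>S\<in>small_cuts n. \<exists>p\<in>cut_pairs n S. X p \<in> cost_layer k c j"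
  shows "Tk_exists_and_cheap n pair_ends X (vpairs n) k c"
proof (rule Tk_exists_and_cheap_if_layers_connected[OF proper_edges_vpairs])
  show "finite {e \<in> vpairs n. X e \<le> c}" using finite_vpairs by simp
  show "inj_on X {e \<in> vpairs n. X e \<le> c}" using assms(1) by (rule inj_on_subset) auto
  fix j u v assume "1 \<le> j" "j \<le> k" "u < n" "v < n"
  then show "connects pair_ends {e \<in> vpairs n. X e \<in> cost_layer k c j} u v"
    using hit by (intro connects_cost_layer_if_cuts_hit[where edge = id]) (auto simp: pair_ends_def)
qed (use assms in auto)

lemma simple_model_measure_ge:
  assumes atomless: "atomless_law P" and k: "k \<ge> 1" and n: "n \<ge> 2"
    and layer: "\<forall>j\<in>{1..k}. 3/2 * ln (real n) / real n \<le> measure P (cost_layer k (thr k n) j)"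
  shows "1 - real k * disconnection_bound n \<le> measure (PiM (vpairs n) (\<lambda>_. P))
     {X \<in> space (PiM (vpairs n) (\<lambda>_. P)). Tk_exists_and_cheap n pair_ends X (vpairs n) k (thr k n)}"
proof -
  let ?M = "PiM (vpairs n) (\<lambda>_. P)"
  define miss where "miss j = {X \<in> space ?M. \<exists>S\<in>small_cuts n. \<forall>p\<in>cut_pairs n S.
    X p \<notin> cost_layer k (thr k n) j}" for j
  have miss: "miss j \<in> sets ?M" "measure ?M (miss j) \<le> disconnection_bound n" if "j \<in> {1..k}" for j
  proof -
    have "cost_layer k (thr k n) j \<in> sets borel" unfolding cost_layer_def by simp
    from measure_cut_missed_le[OF atomless inj_on_id _ this] layer that n
    show "miss j \<in> sets ?M" "measure ?M (miss j) \<le> disconnection_bound n"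
      unfolding miss_def by auto
  qed
  have "1 - (measure ?M {} + (\<Sum>j\<in>{1..k}. measure ?M (miss j))) \<le>
    measure ?M {X \<in> space ?M. Tk_exists_and_cheap n pair_ends X (vpairs n) k (thr k n)}"
  proof (rule measure_ge_if_complement_covered[OF prob_space_PiM_atomless[OF atomless]
        sets_Tk_exists_and_cheap[OF _ _ k] null_sets_PiM_not_inj[OF atomless finite_vpairs]])
    show "space ?M - {X \<in> space ?M. Tk_exists_and_cheap n pair_ends X (vpairs n) k (thr k n)}
      \<subseteq> {X \<in> space ?M. \<not> inj_on X (vpairs n)} \<union> {} \<union> (\<Union>j\<in>{1..k}. miss j)"
      using simple_Tk_exists_and_cheap_if_layers_hit[OF _ k thr_nonneg] unfolding miss_def by fastforce
  qed (use countable_finite[OF finite_vpairs] borel_measurable_coordinate[OF atomless] miss in auto)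
  moreover have "(\<Sum>j\<in>{1..k}. measure ?M (miss j)) \<le> real k * disconnection_bound n"
    using sum_mono[of "{1..k}" "\<lambda>j. measure ?M (miss j)" "\<lambda>_. disconnection_bound n"] miss by simp
  ultimately show ?thesis by simp
qed

lemma simple_model_Tk_tendsto_1:
  assumes atomless: "atomless_law P" and k: "k \<ge> 1"
    and layers: "\<forall>\<^sub>F n in sequentially. \<forall>j\<in>{1..k}.
       3/2 * ln (real n) / real n \<le> measure P (cost_layer k (thr k n) j)"
  shows "(\<lambda>n. measure (PiM (vpairs n) (\<lambda>_. P))
     {X \<in> space (PiM (vpairs n) (\<lambda>_. P)). Tk_exists_and_cheap n pair_ends X (vpairs n) k (thr k n)}) \<longlonglongrightarrow> 1"
proof (rule tendsto_1_if_lower_bound)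
  show "\<forall>\<^sub>F n in sequentially. 1 - real k * disconnection_bound n \<le> measure (PiM (vpairs n) (\<lambda>_. P))
     {X \<in> space (PiM (vpairs n) (\<lambda>_. P)). Tk_exists_and_cheap n pair_ends X (vpairs n) k (thr k n)}"
    using layers eventually_ge_at_top[of 2]
    by eventually_elim (rule simple_model_measure_ge[OF atomless k])
  show "(\<lambda>n. real k * disconnection_bound n) \<longlonglongrightarrow> 0"
    using tendsto_mult_right_zero[OF disconnection_bound_tendsto_0] .
qed (rule prob_space.prob_le_1[OF prob_space_PiM_atomless[OF atomless]])

text \<open>The layers have width 2 log n / n, and 3/2 log n / n is still above log n / n, the
  connectivity threshold of the random graph G(n,q); the slack absorbs the exponential density,
  which stays above 7/8 on the interval [0, 1/8].\<close>

lemma measure_exp_law_Ioc_ge: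
  assumes "0 \<le> a" "0 \<le> d" "a + d \<le> 1/8"
  shows "7/9 * d \<le> measure exp_law {a<..a + d}"
proof -
  have "7/8 \<le> exp (- a)" using exp_ge_add_one_self[of "- a"] assms by linarith
  moreover have "8/9 * d \<le> 1 - exp (- d)"
  proof -
    have "exp (- d) \<le> 1 / (1 + d)"
      using exp_ge_add_one_self[of d] assms by (simp add: exp_minus field_simps)
    moreover have "d * (d * 8) \<le> d * 1" using assms by (intro mult_left_mono) auto
    then have "8/9 * d \<le> 1 - 1 / (1 + d)" using assms by (simp add: field_simps)
    ultimately show ?thesis by linarith
  qed
  ultimately have "7/8 * (8/9 * d) \<le> exp (- a) * (1 - exp (- d))"
    using assms by (intro mult_mono) auto
  also have "\<dots> = measure exp_law {a<..a + d}"
    using assms by (simp add: measure_exp_law_Ioc right_diff_distrib mult_exp_exp)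
  finally show ?thesis by simp
qed

lemma eventually_exp_law_cost_layer_ge:
  "\<forall>\<^sub>F n in sequentially. \<forall>j\<in>{1..k}. 3/2 * ln (real n) / real n \<le> measure exp_law (cost_layer k (thr k n) j)"
  using eventually_thr_le[of k] eventually_ge_at_top[of 2]
proof eventually_elim
  case (elim n)
  show ?case
  proof
    fix j assume "j \<in> {1..k}"
    then have j: "1 \<le> j" "j \<le> k" by auto
    note a = cost_layer_thr[OF j elim(2)]
    have "0 \<le> ln (real n) / real n" using elim(2) by simp
    then have "3/2 * ln (real n) / real n \<le> 7/9 * (2 * ln (real n) / real n)" by simp
    also have "\<dots> \<le> measure exp_law (cost_layer k (thr k n) j)"
      unfolding a(1) using a(2,3) elim \<open>0 \<le> ln (real n) / real n\<close>
      by (intro measure_exp_law_Ioc_ge) auto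
    finally show "3/2 * ln (real n) / real n \<le> measure exp_law (cost_layer k (thr k n) j)" .
  qed
qed

lemma eventually_unif_law_cost_layer_ge:
  "\<forall>\<^sub>F n in sequentially. \<forall>j\<in>{1..k}. 3/2 * ln (real n) / real n \<le> measure unif_law (cost_layer k (thr k n) j)"
  using eventually_thr_le[of k] eventually_ge_at_top[of 2]
proof eventually_elim
  case (elim n)
  show ?case
  proof
    fix j assume "j \<in> {1..k}"
    then have j: "1 \<le> j" "j \<le> k" by auto
    note a = cost_layer_thr[OF j elim(2)]
    have "0 \<le> 2 * ln (real n) / real n" using elim(2) by simp
    then have "measure unif_law (cost_layer k (thr k n) j) = 2 * ln (real n) / real n"
      unfolding a(1) using a(2,3) elim by (subst measure_unif_law_Ioc) auto
    moreover have "0 \<le> ln (real n) / real n" using elim(2) by simp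
    ultimately show "3/2 * ln (real n) / real n \<le> measure unif_law (cost_layer k (thr k n) j)"
      by simp
  qed
qed

theorem exp_model_Tk_tendsto_1:
  assumes "k \<ge> 1"
  shows "(\<lambda>n. measure (exp_model n)
    {X \<in> space (exp_model n). Tk_exists_and_cheap n pair_ends X (vpairs n) k (thr k n)}) \<longlonglongrightarrow> 1"
  unfolding exp_model_def
  by (rule simple_model_Tk_tendsto_1[OF atomless_exp_law assms eventually_exp_law_cost_layer_ge])

theorem unif_model_Tk_tendsto_1:
  assumes "k \<ge> 1"
  shows "(\<lambda>n. measure (unif_model n)
    {X \<in> space (unif_model n). Tk_exists_and_cheap n pair_ends X (vpairs n) k (thr k n)}) \<longlonglongrightarrow> 1"
  unfolding unif_model_def
  by (rule simple_model_Tk_tendsto_1[OF atomless_unif_law assms eventually_unif_law_cost_layer_ge])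

subsection \<open>The Poisson multigraph\<close>

lemma poisson_model_eq_PiM: "poisson_model n = PiM (poisson_edges n) (\<lambda>_. exp_law)"
  unfolding poisson_model_def poisson_edges_def ..

lemma mem_poisson_edges [simp]: "(p, l) \<in> poisson_edges n \<longleftrightarrow> p \<in> vpairs n"
  unfolding poisson_edges_def by simp

lemma countable_poisson_edges: "countable (poisson_edges n)"
  unfolding poisson_edges_def using countable_finite[OF finite_vpairs] by simp

lemma proper_edges_poisson_edges: "proper_edges n poisson_ends (poisson_edges n)"
  using proper_edges_vpairs[of n] unfolding proper_edges_def poisson_ends_def poisson_edges_def by auto

lemma poisson_cost_0 [simp]: "poisson_cost X (p, 0) = X (p, 0)"
  unfolding poisson_cost_def by simp

lemma poisson_cost_Suc: "poisson_cost X (p, Suc l) = poisson_cost X (p, l) + X (p, Suc l)"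
  unfolding poisson_cost_def by simp

lemma borel_measurable_poisson_cost:
  assumes "e \<in> poisson_edges n"
  shows "(\<lambda>X. poisson_cost X e) \<in> borel_measurable (poisson_model n)"
  unfolding poisson_cost_def poisson_model_eq_PiM
  using assms by (intro borel_measurable_sum borel_measurable_coordinate[OF atomless_exp_law])
    (auto simp: poisson_edges_def)

lemma null_sets_poisson_some_nonpos:
  "{X \<in> space (poisson_model n). \<exists>i\<in>poisson_edges n. X i \<le> 0} \<in> null_sets (poisson_model n)"
proof -
  let ?M = "PiM (poisson_edges n) (\<lambda>_. exp_law)"
  interpret prob_space ?M by (rule prob_space_PiM_atomless[OF atomless_exp_law])
  have null: "{X \<in> space ?M. \<forall>j\<in>{i}. X j \<in> {..0}} \<in> null_sets ?M" if "i \<in> poisson_edges n" for i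
  proof -
    have "{X \<in> space ?M. \<forall>j\<in>{i}. X j \<in> {..0}} \<in> sets ?M"
      using that by (intro sets_PiM_cylinder[OF atomless_exp_law]) auto
    moreover have "measure ?M {X \<in> space ?M. \<forall>j\<in>{i}. X j \<in> {..0}} = 0"
      using that measure_exp_law_atMost_0 by (subst measure_PiM_cylinder[OF atomless_exp_law]) auto
    ultimately show ?thesis by (simp add: emeasure_eq_measure null_sets_def)
  qed
  have "{X \<in> space ?M. \<exists>i\<in>poisson_edges n. X i \<le> 0} = (\<Union>i\<in>poisson_edges n. {X \<in> space ?M. \<forall>j\<in>{i}. X j \<in> {..0}})"
    by auto
  also have "\<dots> \<in> null_sets ?M" by (rule null_sets_UN'[OF countable_poisson_edges null])
  finally show ?thesis unfolding poisson_model_eq_PiM .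
qed

text \<open>A tie between parallel-edge costs of different pairs p, q means that X(p,a) is a measurable
  function of the other arrival times involved.\<close>

lemma null_sets_poisson_cost_eq:
  assumes p: "p \<in> vpairs n" and q: "q \<in> vpairs n" and pq: "p \<noteq> q"
  shows "{X \<in> space (poisson_model n). poisson_cost X (p, a) = poisson_cost X (q, b)} \<in> null_sets (poisson_model n)"
proof -
  define J where "J = (\<lambda>l. (p, l)) ` {..a} \<union> (\<lambda>l. (q, l)) ` {..b}"
  have J: "finite J" "J \<subseteq> poisson_edges n" "(p, a) \<in> J" unfolding J_def using p q by auto
  define h where "h x = (\<Sum>l\<le>b. x (q, l)) - (\<Sum>l<a. x (p, l))" for x :: "(nat \<times> nat) \<times> nat \<Rightarrow> real"
  have inJ: "(q, l) \<in> J - {(p, a)}" if "l \<le> b" for l unfolding J_def using that pq by auto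
  have inJ2: "(p, l) \<in> J - {(p, a)}" if "l < a" for l unfolding J_def using that by auto
  have "h \<in> borel_measurable (PiM (J - {(p, a)}) (\<lambda>_. exp_law))"
    unfolding h_def using inJ inJ2
    by (intro borel_measurable_diff borel_measurable_sum borel_measurable_coordinate[OF atomless_exp_law]) auto
  from null_sets_PiM_coordinate_eq[OF atomless_exp_law J this]
  have "{X \<in> space (poisson_model n). X (p, a) = h (restrict X (J - {(p, a)}))} \<in> null_sets (poisson_model n)"
    unfolding poisson_model_eq_PiM .
  moreover have "h (restrict X (J - {(p, a)})) = h X" for X
    unfolding h_def using inJ inJ2 by (intro arg_cong2[where f = "(-)"] sum.cong) auto
  moreover have "poisson_cost X (p, a) = poisson_cost X (q, b) \<longleftrightarrow> X (p, a) = h X" for X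
    unfolding h_def poisson_cost_def by (cases a) (auto simp: lessThan_Suc_atMost[symmetric])
  ultimately show ?thesis by simp
qed

lemma null_sets_poisson_cost_tie:
  "{X \<in> space (poisson_model n). \<exists>p\<in>vpairs n. \<exists>q\<in>vpairs n. \<exists>a\<in>{0,1}. \<exists>b\<in>{0,1}. p \<noteq> q \<and>
      poisson_cost X (p, a) = poisson_cost X (q, b)} \<in> null_sets (poisson_model n)"
proof -
  let ?N = "\<lambda>p q a b. {X \<in> space (poisson_model n). p \<noteq> q \<and> poisson_cost X (p, a) = poisson_cost X (q, b)}"
  have "{X \<in> space (poisson_model n). \<exists>p\<in>vpairs n. \<exists>q\<in>vpairs n. \<exists>a\<in>{0,1}. \<exists>b\<in>{0,1}. p \<noteq> q \<and>
      poisson_cost X (p, a) = poisson_cost X (q, b)} =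
     (\<Union>p\<in>vpairs n. \<Union>q\<in>vpairs n. \<Union>a\<in>{0::nat,1}. \<Union>b\<in>{0::nat,1}. ?N p q a b)"
    by blast
  also have "\<dots> \<in> null_sets (poisson_model n)"
  proof (intro null_sets_UN' countable_finite finite_vpairs finite.intros)
    fix p q a b assume "p \<in> vpairs n" "q \<in> vpairs n"
    then show "?N p q a b \<in> null_sets (poisson_model n)"
      using null_sets_poisson_cost_eq by (cases "p = q") auto
  qed
  finally show ?thesis .
qed

lemma card_vpairs_le: "card (vpairs n) \<le> n ^ 2"
proof -
  have "card (vpairs n) \<le> card ({..<n} \<times> {..<n})"
    by (rule card_mono) (auto simp: vpairs_def)
  then show ?thesis by (simp add: card_cartesian_product power2_eq_square)
qed

lemma measure_three_cheap_arrivals_le: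
  fixes n :: nat and c :: real
  assumes c: "0 \<le> c"
  defines "E \<equiv> {X \<in> space (poisson_model n). \<exists>p\<in>vpairs n. X (p, 0) \<le> c \<and> X (p, 1) \<le> c \<and> X (p, 2) \<le> c}"
  shows "E \<in> sets (poisson_model n)" and "measure (poisson_model n) E \<le> real n ^ 2 * c ^ 3"
proof -
  let ?M = "PiM (poisson_edges n) (\<lambda>_. exp_law)"
  define T where "T p = {(p, 0::nat), (p, 1), (p, 2)}" for p :: "nat \<times> nat"
  define B where "B p = {X \<in> space ?M. \<forall>j\<in>T p. X j \<in> {..c}}" for p
  have eq: "E = (\<Union>p\<in>vpairs n. B p)" unfolding E_def B_def T_def poisson_model_eq_PiM by auto
  have T: "finite (T p)" "T p \<subseteq> poisson_edges n" if "p \<in> vpairs n" for p unfolding T_def using that by auto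
  have B: "B p \<in> sets ?M" if "p \<in> vpairs n" for p
    unfolding B_def by (rule sets_PiM_cylinder[OF atomless_exp_law T[OF that]]) auto
  have exp_c: "measure exp_law {..c} \<le> c"
    using measure_exp_law_atMost[OF c] exp_ge_add_one_self[of "- c"] by simp
  have "measure ?M (B p) \<le> c ^ 3" if "p \<in> vpairs n" for p
  proof -
    have "measure ?M (B p) = measure exp_law {..c} ^ 3"
      unfolding B_def using T[OF that]
      by (subst measure_PiM_cylinder[OF atomless_exp_law]) (auto simp: T_def power3_eq_cube)
    also have "\<dots> \<le> c ^ 3" using exp_c by (intro power_mono) auto
    finally show ?thesis .
  qed
  then have "(\<Sum>p\<in>vpairs n. measure ?M (B p)) \<le> real (card (vpairs n)) * c ^ 3"
    using sum_mono[of "vpairs n" "\<lambda>p. measure ?M (B p)" "\<lambda>_. c ^ 3"] by simp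
  moreover have "measure ?M (\<Union>p\<in>vpairs n. B p) \<le> (\<Sum>p\<in>vpairs n. measure ?M (B p))"
    using finite_vpairs B by (intro measure_UNION_le) auto
  moreover have "real (card (vpairs n)) * c ^ 3 \<le> real n ^ 2 * c ^ 3"
    using card_vpairs_le[of n] c by (intro mult_right_mono) (simp_all add: of_nat_le_iff[symmetric])
  ultimately have "measure ?M (\<Union>p\<in>vpairs n. B p) \<le> real n ^ 2 * c ^ 3" by linarith
  then show "measure (poisson_model n) E \<le> real n ^ 2 * c ^ 3" unfolding eq poisson_model_eq_PiM .
  show "E \<in> sets (poisson_model n)"
    unfolding eq poisson_model_eq_PiM using finite_vpairs B by (intro sets.finite_UN) auto
qed

lemma cheap_poisson_edges_subset:
  assumes pos: "\<forall>i\<in>poisson_edges n. 0 < X i"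
    and three: "\<forall>p\<in>vpairs n. \<not> (X (p, 0) \<le> c \<and> X (p, 1) \<le> c \<and> X (p, 2) \<le> c)"
  shows "{e \<in> poisson_edges n. poisson_cost X e \<le> c} \<subseteq> vpairs n \<times> {0, 1}"
proof
  fix e assume e: "e \<in> {e \<in> poisson_edges n. poisson_cost X e \<le> c}"
  obtain p m where pm: "e = (p, m)" "p \<in> vpairs n" using e by (cases e) auto
  have "m \<le> 1"
  proof (rule ccontr)
    assume "\<not> m \<le> 1"
    then have "(\<Sum>l\<in>{0,1,2::nat}. X (p, l)) \<le> (\<Sum>l\<le>m. X (p, l))"
      using pos pm by (intro sum_mono2) (auto intro: less_imp_le)
    moreover have "c < X (p, 0) + X (p, 1) + X (p, 2)"
    proof -
      have "0 < X (p, 0)" "0 < X (p, 1)" "0 < X (p, 2)" using pos pm by auto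
      moreover have "\<not> (X (p, 0) \<le> c \<and> X (p, 1) \<le> c \<and> X (p, 2) \<le> c)" using three pm by blast
      ultimately show ?thesis by linarith
    qed
    ultimately have "c < poisson_cost X (p, m)" unfolding poisson_cost_def by simp
    then show False using e pm by simp
  qed
  then show "e \<in> vpairs n \<times> {0, 1}" using pm by auto
qed

lemma poisson_Tk_exists_and_cheap_if_layers_hit:
  assumes k: "k \<ge> 1" and c: "0 \<le> c"
    and pos: "\<forall>i\<in>poisson_edges n. 0 < X i"
    and three: "\<forall>p\<in>vpairs n. \<not> (X (p, 0) \<le> c \<and> X (p, 1) \<le> c \<and> X (p, 2) \<le> c)"
    and no_tie: "\<forall>p\<in>vpairs n. \<forall>q\<in>vpairs n. \<forall>a\<in>{0,1}. \<forall>b\<in>{0,1}. p \<noteq> q \<longrightarrow>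
      poisson_cost X (p, a) \<noteq> poisson_cost X (q, b)"
    and hit: "\<forall>j\<in>{1..k}. \<forall>S\<in>small_cuts n. \<exists>p\<in>cut_pairs n S. X (p, 0) \<in> cost_layer k c j"
  shows "Tk_exists_and_cheap n poisson_ends (poisson_cost X) (poisson_edges n) k c"
proof (rule Tk_exists_and_cheap_if_layers_connected[OF proper_edges_poisson_edges _ _ k c])
  note cheap = cheap_poisson_edges_subset[OF pos three]
  show "finite {e \<in> poisson_edges n. poisson_cost X e \<le> c}"
    using finite_vpairs by (intro finite_subset[OF cheap]) auto
  show "inj_on (poisson_cost X) {e \<in> poisson_edges n. poisson_cost X e \<le> c}"
  proof (rule inj_onI)
    fix e e' assume "e \<in> {e \<in> poisson_edges n. poisson_cost X e \<le> c}"
      "e' \<in> {e \<in> poisson_edges n. poisson_cost X e \<le> c}" and eq: "poisson_cost X e = poisson_cost X e'"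
    then obtain p a q b where pa: "e = (p, a)" "p \<in> vpairs n" "a \<in> {0, 1}"
      and qb: "e' = (q, b)" "q \<in> vpairs n" "b \<in> {0, 1}" using cheap by blast
    then have "p = q" using no_tie eq by blast
    moreover have "poisson_cost X (p, 0) < poisson_cost X (p, 1)"
      using pos pa by (simp add: poisson_cost_Suc[of X p 0, simplified])
    ultimately show "e = e'" using pa qb eq by auto
  qed
  fix j u v assume "1 \<le> j" "j \<le> k" "u < n" "v < n"
  then show "connects poisson_ends {e \<in> poisson_edges n. poisson_cost X e \<in> cost_layer k c j} u v"
    using hit
    by (intro connects_cost_layer_if_cuts_hit[where edge = "\<lambda>p. (p, 0)"])
      (auto simp: poisson_ends_def pair_ends_def)
qed

lemma poisson_model_measure_ge:
  assumes k: "k \<ge> 1" and n: "n \<ge> 2"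
    and layer: "\<forall>j\<in>{1..k}. 3/2 * ln (real n) / real n \<le> measure exp_law (cost_layer k (thr k n) j)"
  shows "1 - (real n ^ 2 * thr k n ^ 3 + real k * disconnection_bound n) \<le> measure (poisson_model n)
    {X \<in> space (poisson_model n). Tk_exists_and_cheap n poisson_ends (poisson_cost X) (poisson_edges n) k (thr k n)}"
proof -
  let ?M = "poisson_model n"
  define c where "c = thr k n"
  define three where "three = {X \<in> space ?M. \<exists>p\<in>vpairs n. X (p, 0) \<le> c \<and> X (p, 1) \<le> c \<and> X (p, 2) \<le> c}"
  define miss where "miss j = {X \<in> space ?M. \<exists>S\<in>small_cuts n. \<forall>p\<in>cut_pairs n S.
    X (p, 0) \<notin> cost_layer k c j}" for j
  have three: "three \<in> sets ?M" "measure ?M three \<le> real n ^ 2 * c ^ 3"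
    using measure_three_cheap_arrivals_le[OF thr_nonneg] unfolding three_def c_def by auto
  have miss: "miss j \<in> sets ?M" "measure ?M (miss j) \<le> disconnection_bound n" if "j \<in> {1..k}" for j
  proof -
    have "inj_on (\<lambda>p. (p, 0::nat)) (vpairs n)" by (rule inj_onI) simp
    moreover have "cost_layer k c j \<in> sets borel" unfolding cost_layer_def by simp
    moreover have "(\<lambda>p. (p, 0::nat)) ` vpairs n \<subseteq> poisson_edges n" by auto
    ultimately show "miss j \<in> sets ?M" "measure ?M (miss j) \<le> disconnection_bound n"
      using measure_cut_missed_le[OF atomless_exp_law, of "\<lambda>p. (p, 0)" n "poisson_edges n"]
        layer that n unfolding miss_def c_def poisson_model_eq_PiM by auto
  qed
  have "1 - (measure ?M three + (\<Sum>j\<in>{1..k}. measure ?M (miss j))) \<le>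
    measure ?M {X \<in> space ?M. Tk_exists_and_cheap n poisson_ends (poisson_cost X) (poisson_edges n) k c}"
  proof (rule measure_ge_if_complement_covered[OF _ _ _ three(1) finite_atLeastAtMost miss(1)])
    show "prob_space ?M"
      unfolding poisson_model_eq_PiM by (rule prob_space_PiM_atomless[OF atomless_exp_law])
    show "{X \<in> space ?M. Tk_exists_and_cheap n poisson_ends (poisson_cost X) (poisson_edges n) k c} \<in> sets ?M"
      by (rule sets_Tk_exists_and_cheap[OF countable_poisson_edges borel_measurable_poisson_cost k])
    show "{X \<in> space ?M. \<exists>i\<in>poisson_edges n. X i \<le> 0} \<union>
        {X \<in> space ?M. \<exists>p\<in>vpairs n. \<exists>q\<in>vpairs n. \<exists>a\<in>{0,1}. \<exists>b\<in>{0,1}. p \<noteq> q \<and>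
          poisson_cost X (p, a) = poisson_cost X (q, b)} \<in> null_sets ?M"
      by (rule null_sets.Un[OF null_sets_poisson_some_nonpos null_sets_poisson_cost_tie])
    show "space ?M - {X \<in> space ?M. Tk_exists_and_cheap n poisson_ends (poisson_cost X) (poisson_edges n) k c}
      \<subseteq> {X \<in> space ?M. \<exists>i\<in>poisson_edges n. X i \<le> 0} \<union>
        {X \<in> space ?M. \<exists>p\<in>vpairs n. \<exists>q\<in>vpairs n. \<exists>a\<in>{0,1}. \<exists>b\<in>{0,1}. p \<noteq> q \<and>
          poisson_cost X (p, a) = poisson_cost X (q, b)} \<union> three \<union> (\<Union>j\<in>{1..k}. miss j)"
    proof
      fix X assume X: "X \<in> space ?M - {X \<in> space ?M.
        Tk_exists_and_cheap n poisson_ends (poisson_cost X) (poisson_edges n) k c}"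
      show "X \<in> {X \<in> space ?M. \<exists>i\<in>poisson_edges n. X i \<le> 0} \<union>
        {X \<in> space ?M. \<exists>p\<in>vpairs n. \<exists>q\<in>vpairs n. \<exists>a\<in>{0,1}. \<exists>b\<in>{0,1}. p \<noteq> q \<and>
          poisson_cost X (p, a) = poisson_cost X (q, b)} \<union> three \<union> (\<Union>j\<in>{1..k}. miss j)"
      proof (rule ccontr)
        assume "\<not> ?thesis"
        then have nonpos: "\<forall>i\<in>poisson_edges n. 0 < X i"
          and no_tie: "\<forall>p\<in>vpairs n. \<forall>q\<in>vpairs n. \<forall>a\<in>{0,1}. \<forall>b\<in>{0,1}. p \<noteq> q \<longrightarrow>
            poisson_cost X (p, a) \<noteq> poisson_cost X (q, b)"
          and "X \<notin> three" "\<And>j. j \<in> {1..k} \<Longrightarrow> X \<notin> miss j"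
          using X by (auto simp: not_le)
        have "Tk_exists_and_cheap n poisson_ends (poisson_cost X) (poisson_edges n) k c"
        proof (rule poisson_Tk_exists_and_cheap_if_layers_hit[OF k thr_nonneg[of k n, folded c_def] nonpos _ no_tie])
          show "\<forall>p\<in>vpairs n. \<not> (X (p, 0) \<le> c \<and> X (p, 1) \<le> c \<and> X (p, 2) \<le> c)"
            using X \<open>X \<notin> three\<close> unfolding three_def by auto
          show "\<forall>j\<in>{1..k}. \<forall>S\<in>small_cuts n. \<exists>p\<in>cut_pairs n S. X (p, 0) \<in> cost_layer k c j"
            using X \<open>\<And>j. j \<in> {1..k} \<Longrightarrow> X \<notin> miss j\<close> unfolding miss_def by auto
        qed
        then show False using X by blast
      qed
    qed
  qed
  moreover have "(\<Sum>j\<in>{1..k}. measure ?M (miss j)) \<le> real k * disconnection_bound n"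
    using sum_mono[of "{1..k}" "\<lambda>j. measure ?M (miss j)" "\<lambda>_. disconnection_bound n"] miss by simp
  ultimately show ?thesis using three(2) unfolding c_def by simp
qed

lemma square_thr_cube_tendsto_0: "(\<lambda>n. real n ^ 2 * thr k n ^ 3) \<longlonglongrightarrow> 0"
proof -
  have "(\<lambda>n. 8 * real k ^ 3 * (ln (real n) ^ 3 / real n)) \<longlonglongrightarrow> 0"
    by (rule tendsto_mult_right_zero) real_asymp
  moreover have "real n ^ 2 * thr k n ^ 3 = 8 * real k ^ 3 * (ln (real n) ^ 3 / real n)" for n
    unfolding thr_def by (cases "n = 0") (simp_all add: field_simps power2_eq_square power3_eq_cube)
  ultimately show ?thesis by simp
qed

theorem poisson_model_Tk_tendsto_1:
  assumes k: "k \<ge> 1"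
  shows "(\<lambda>n. measure (poisson_model n)
    {X \<in> space (poisson_model n).
       Tk_exists_and_cheap n poisson_ends (poisson_cost X) (poisson_edges n) k (thr k n)}) \<longlonglongrightarrow> 1"
proof (rule tendsto_1_if_lower_bound)
  show "\<forall>\<^sub>F n in sequentially. 1 - (real n ^ 2 * thr k n ^ 3 + real k * disconnection_bound n) \<le>
    measure (poisson_model n) {X \<in> space (poisson_model n).
       Tk_exists_and_cheap n poisson_ends (poisson_cost X) (poisson_edges n) k (thr k n)}"
    using eventually_exp_law_cost_layer_ge eventually_ge_at_top[of 2]
    by eventually_elim (rule poisson_model_measure_ge[OF k])
  show "(\<lambda>n. real n ^ 2 * thr k n ^ 3 + real k * disconnection_bound n) \<longlonglongrightarrow> 0"
    using tendsto_add[OF square_thr_cube_tendsto_0 tendsto_mult_right_zero[OF disconnection_bound_tendsto_0]]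
    by simp
qed (simp add: poisson_model_eq_PiM prob_space.prob_le_1[OF prob_space_PiM_atomless[OF atomless_exp_law]])

theorem lemma7p2:
  fixes k :: nat
  assumes "k \<ge> 1"
  shows
    "((\<lambda>n. measure (poisson_model n)
        {X \<in> space (poisson_model n).
           Tk_exists_and_cheap n poisson_ends (poisson_cost X) (poisson_edges n) k (thr k n)})
       \<longlonglongrightarrow> 1) \<and>
    ((\<lambda>n. measure (exp_model n)
        {X \<in> space (exp_model n).
           Tk_exists_and_cheap n pair_ends X (vpairs n) k (thr k n)})
       \<longlonglongrightarrow> 1) \<and>
    ((\<lambda>n. measure (unif_model n)
        {X \<in> space (unif_model n).
           Tk_exists_and_cheap n pair_ends X (vpairs n) k (thr k n)})
       \<longlonglongrightarrow> 1)"
  using poisson_model_Tk_tendsto_1[OF assms] exp_model_Tk_tendsto_1[OF assms]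
    unif_model_Tk_tendsto_1[OF assms]
  by blast

end
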